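(* Let $p$ be prime and let $H$ be a proper subgroup of $G=\mathbb{Z}_{p^2}\times\mathbb{Z}_p$. A set $A\subset H$ is a tile of $G$ if and only if it is a spectral set in $G$.
   Context: For $b=(b_1,b_2)\in G$ let $\chi_b(a_1,a_2)=e^{2\pi i(a_1b_1/p^2+a_2b_2/p)}$. $A$ is a spectral set if there is $B\subset G$ with $\{\chi_b|_A:b\in B\}$ an orthogonal basis of $L^2(A)$ (counting measure). $A$ is a tile if there is $T\subset G$ with $A\oplus T=G$ (every element of $G$ uniquely $a+t$, $a\in A,t\in T$). *)

theory Defs
  imports Complex_Main "HOL-Computational_Algebra.Primes"
begin

text \<open>The group G = Z_{p^2} x Z_p, elements represented by pairs of canonical residues.\<close>

definition grpG :: "nat \<Rightarrow> (nat \<times> nat) set" where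
  "grpG p = {(a1, a2). a1 < p^2 \<and> a2 < p}"

definition gadd :: "nat \<Rightarrow> nat \<times> nat \<Rightarrow> nat \<times> nat \<Rightarrow> nat \<times> nat" where
  "gadd p x y = ((fst x + fst y) mod p^2, (snd x + snd y) mod p)"

definition gneg :: "nat \<Rightarrow> nat \<times> nat \<Rightarrow> nat \<times> nat" where
  "gneg p x = ((p^2 - fst x) mod p^2, (p - snd x) mod p)"

definition is_subgroupG :: "nat \<Rightarrow> (nat \<times> nat) set \<Rightarrow> bool" where
  "is_subgroupG p H \<longleftrightarrow> H \<subseteq> grpG p \<and> (0, 0) \<in> H
     \<and> (\<forall>x\<in>H. \<forall>y\<in>H. gadd p x y \<in> H) \<and> (\<forall>x\<in>H. gneg p x \<in> H)"

definition chiG :: "nat \<Rightarrow> nat \<times> nat \<Rightarrow> nat \<times> nat \<Rightarrow> complex" where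
  "chiG p b a = exp (2 * pi * \<i> * complex_of_real
      (real (fst a * fst b) / real (p^2) + real (snd a * snd b) / real p))"

definition innerA :: "(nat \<times> nat) set \<Rightarrow> (nat \<times> nat \<Rightarrow> complex) \<Rightarrow> (nat \<times> nat \<Rightarrow> complex) \<Rightarrow> complex" where
  "innerA A f g = (\<Sum>a\<in>A. f a * cnj (g a))"

text \<open>{chi_b|_A : b in B} is an orthogonal basis of L^2(A): nonzero, pairwise orthogonal,
  and spanning all functions A -> complex.\<close>
definition spectrum_of :: "nat \<Rightarrow> (nat \<times> nat) set \<Rightarrow> (nat \<times> nat) set \<Rightarrow> bool" where
  "spectrum_of p A B \<longleftrightarrow> B \<subseteq> grpG p
     \<and> (\<forall>b\<in>B. \<exists>a\<in>A. chiG p b a \<noteq> 0)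
     \<and> (\<forall>b\<in>B. \<forall>b'\<in>B. b \<noteq> b' \<longrightarrow> innerA A (chiG p b) (chiG p b') = 0)
     \<and> (\<forall>f :: nat \<times> nat \<Rightarrow> complex. \<exists>c :: nat \<times> nat \<Rightarrow> complex.
          \<forall>a\<in>A. f a = (\<Sum>b\<in>B. c b * chiG p b a))"

definition spectral_set :: "nat \<Rightarrow> (nat \<times> nat) set \<Rightarrow> bool" where
  "spectral_set p A \<longleftrightarrow> (\<exists>B. spectrum_of p A B)"

definition tile :: "nat \<Rightarrow> (nat \<times> nat) set \<Rightarrow> bool" where
  "tile p A \<longleftrightarrow> (\<exists>T. T \<subseteq> grpG p \<and>
     (\<forall>g\<in>grpG p. \<exists>!u. fst u \<in> A \<and> snd u \<in> T \<and> g = gadd p (fst u) (snd u)))"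

end

theory Submission
  imports Defs "HOL-Computational_Algebra.Polynomial_Factorial" "HOL-Library.Function_Algebras"
    "HOL-Number_Theory.Cong"
begin

text \<open>
  Every proper subgroup of \<open>G = \<int>/p\<^sup>2 \<times> \<int>/p\<close> lies in a maximal subgroup of order \<open>p\<^sup>2\<close>: either
  \<open>p(\<int>/p\<^sup>2) \<times> \<int>/p \<cong> (\<int>/p)\<^sup>2\<close> or one of the cyclic subgroups generated by \<open>(1, l)\<close>. For \<open>A\<close> inside such a
  subgroup, tiling forces some nontrivial character sum of \<open>A\<close> to vanish, and spectrality forces
  the character sums at the differences of spectral points to vanish. All these sums are sums of
  \<open>p\<^sup>2\<close>-th roots of unity; as the cyclotomic polynomial \<open>\<Phi>_(p\<^sup>2)\<close> is irreducible (Eisenstein), such a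
  sum vanishes only if its terms form a union of cosets of the group of \<open>p\<close>-th roots of unity.
  Together with \<open>|A|\<close> dividing \<open>|G|\<close>, resp. the size of the spectrum, this pins \<open>A\<close> down to a point, the
  whole subgroup, or \<open>p\<close> elements forming a coset or a transversal of an order-\<open>p\<close> subgroup; each
  of these shapes is directly seen to be both a tile and a spectral set.
\<close>

section \<open>Elementary arithmetic\<close>

lemma dvd_abs_less_eq_0:
  fixes m :: int
  assumes "int n dvd m" and "\<bar>m\<bar> < int n"
  shows "m = 0"
proof (rule ccontr)
  assume "m \<noteq> 0"
  hence "\<bar>int n\<bar> \<le> \<bar>m\<bar>" using assms(1) by (rule dvd_imp_le_int)
  thus False using assms(2) by simp
qed

lemma nat_eq_if_dvd_diff:
  assumes "int m dvd int a - int b" and "a < m" and "b < m"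
  shows "a = b"
proof -
  have "\<bar>int a - int b\<bar> < int m" using assms(2,3) by linarith
  thus ?thesis using dvd_abs_less_eq_0[OF assms(1)] by simp
qed

lemma not_dvd_diff_if_less:
  assumes "j < p" and "j' < p" and "j \<noteq> j'"
  shows "\<not> int p dvd int j - int j'"
  using nat_eq_if_dvd_diff[of p j j'] assms by auto

lemma not_dvd_pair_diff_if_less:
  assumes "x \<in> {..<p} \<times> {..<p}" and "y \<in> {..<p} \<times> {..<p}" and "x \<noteq> y"
  shows "\<not> (int p dvd int (fst x) - int (fst y) \<and> int p dvd int (snd x) - int (snd y))"
  using assms nat_eq_if_dvd_diff[of p "fst x" "fst y"] nat_eq_if_dvd_diff[of p "snd x" "snd y"]
  by (auto simp: prod_eq_iff)

lemma dvd_nat_mod_diff: "m > 0 \<Longrightarrow> int m dvd int (nat (x mod int m)) - x"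
  by (simp add: mod_eq_dvd_iff[symmetric] algebra_simps)

lemma dvd_nat_mod_diff_nat:
  assumes "int m dvd int z - y"
  shows "int m dvd int (z mod m) - y"
proof -
  have "int m dvd int z - int (z mod m)" by (simp add: of_nat_mod minus_mod_eq_mult_div)
  from dvd_diff[OF assms this] show ?thesis by simp
qed

lemma dvd_diff_if_mod_eq: "(x::nat) mod n = y mod n \<Longrightarrow> int n dvd int x - int y"
  by (metis mod_eq_dvd_iff of_nat_mod)

lemma nat_mod_mod_sq:
  assumes "p > 0"
  shows "int (nat (y mod int (p*p)) mod p) = y mod int p"
proof -
  have "int (nat (y mod int (p*p)) mod p) = (y mod int (p*p)) mod int p"
    using assms by (simp add: of_nat_mod)
  also have "\<dots> = y mod int p" by (rule mod_mod_cancel) simp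
  finally show ?thesis .
qed

lemma nat_mult_eq_iff:
  assumes "p > 0" and "y \<ge> 0"
  shows "nat (int p * y) = p * k \<longleftrightarrow> y = int k"
proof -
  have "nat (int p * y) = p * k \<longleftrightarrow> int p * y = int p * int k"
    using assms by (auto simp: nat_eq_iff)
  also have "\<dots> \<longleftrightarrow> y = int k" using assms by simp
  finally show ?thesis .
qed

lemma mult_mod_sq_cong:
  fixes y d :: int
  shows "(int p * ((y mod int p) * d)) mod int (p*p) = (int p * (y * d)) mod int (p*p)"
proof -
  have "(int p * ((y mod int p) * d)) mod int (p*p) = int p * (((y mod int p) * d) mod int p)"
    by (simp only: of_nat_mult mod_mult_mult1)
  also have "((y mod int p) * d) mod int p = (y * d) mod int p" by (rule mod_mult_cong) simp_all
  also have "int p * ((y * d) mod int p) = (int p * (y * d)) mod int (p*p)"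
    by (simp only: of_nat_mult mod_mult_mult1)
  finally show ?thesis .
qed

lemma coprime_sq_if_not_dvd:
  assumes "prime p" and "\<not> int p dvd D"
  shows "coprime D (int (p*p))"
proof -
  have "coprime (int p) D" using assms by (intro prime_imp_coprime) auto
  thus ?thesis by (simp add: coprime_commute)
qed

lemma proportional_mod_prime:
  assumes p: "prime p" and nd: "\<not> (int p dvd D1 \<and> int p dvd D2)"
    and c: "int p dvd D1 * v2 - D2 * v1"
  shows "\<exists>k. int p dvd k * D1 - v1 \<and> int p dvd k * D2 - v2"
proof -
  have pi: "prime (int p)" using p by simp
  show ?thesis
  proof (cases "int p dvd D1")
    case False
    have "coprime D1 (int p)" using False pi by (metis coprime_commute prime_imp_coprime)
    then obtain i where "[D1 * i = 1] (mod int p)" using cong_solve_coprime_int by blast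
    hence i: "int p dvd D1 * i - 1" by (simp add: cong_iff_dvd_diff)
    define k where "k = v1 * i"
    have a: "k * D1 - v1 = v1 * (D1 * i - 1)" unfolding k_def by (simp add: algebra_simps)
    have b: "D1 * (k * D2 - v2) = (D1 * i - 1) * (v1 * D2) + (-1) * (D1 * v2 - D2 * v1)"
      unfolding k_def by (simp add: algebra_simps)
    have "int p dvd D1 * (k * D2 - v2)" unfolding b using i c by (intro dvd_add dvd_mult2 dvd_mult)
    hence "int p dvd k * D2 - v2" using False pi by (simp add: prime_dvd_mult_iff)
    moreover have "int p dvd k * D1 - v1" unfolding a using i by (rule dvd_mult)
    ultimately show ?thesis by blast
  next
    case True
    hence False2: "\<not> int p dvd D2" using nd by blast
    have "coprime D2 (int p)" using False2 pi by (metis coprime_commute prime_imp_coprime)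
    then obtain i where "[D2 * i = 1] (mod int p)" using cong_solve_coprime_int by blast
    hence i: "int p dvd D2 * i - 1" by (simp add: cong_iff_dvd_diff)
    define k where "k = v2 * i"
    have a: "k * D2 - v2 = v2 * (D2 * i - 1)" unfolding k_def by (simp add: algebra_simps)
    have b: "D2 * (k * D1 - v1) = (D2 * i - 1) * (v2 * D1) + 1 * (D1 * v2 - D2 * v1)"
      unfolding k_def by (simp add: algebra_simps)
    have "int p dvd D2 * (k * D1 - v1)" unfolding b using i c by (intro dvd_add dvd_mult2 dvd_mult)
    hence "int p dvd k * D1 - v1" using False2 pi by (simp add: prime_dvd_mult_iff)
    moreover have "int p dvd k * D2 - v2" unfolding a using i by (rule dvd_mult)
    ultimately show ?thesis by blast
  qed
qed

lemma mult_add_less_sq: "r < p \<Longrightarrow> k < p \<Longrightarrow> k*p + r < (p*p::nat)"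
proof -
  assume "r < p" "k < p"
  hence "k*p + r < (k+1)*p" by simp
  also have "\<dots> \<le> p*p" using \<open>k < p\<close> by (intro mult_right_mono) auto
  finally show ?thesis .
qed

lemma dvd_le_imp_eq: "p dvd n \<Longrightarrow> 0 < n \<Longrightarrow> n \<le> p \<Longrightarrow> n = (p::nat)"
  using dvd_imp_le by (metis le_antisym)

lemma dvd_cube_le_sq_cases:
  fixes n p :: nat
  assumes p: "prime p" and "n dvd p^3" and "n \<le> p*p"
  shows "n = 1 \<or> n = p \<or> n = p*p"
proof -
  obtain i where i: "i \<le> 3" "n = p^i" using divides_primepow_nat[OF p] assms(2) by blast
  have "p*p*1 < p*p*p" using prime_gt_1_nat[OF p] by (intro mult_strict_left_mono) auto
  hence "i \<noteq> 3" using i assms(3) by (auto simp: power3_eq_cube)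
  hence "i = 0 \<or> i = 1 \<or> i = 2" using i by auto
  thus ?thesis using i by (auto simp: power2_eq_square)
qed

lemma card_le_if_diffs_not_dvd:
  fixes F :: "'b \<Rightarrow> int"
  assumes "p > 0" and "\<And>b b'. b \<in> B \<Longrightarrow> b' \<in> B \<Longrightarrow> b \<noteq> b' \<Longrightarrow> \<not> int p dvd F b - F b'"
  shows "card B \<le> p"
proof -
  have "inj_on (\<lambda>b. nat (F b mod int p)) B"
  proof (rule inj_onI)
    fix b b' assume bb: "b \<in> B" "b' \<in> B" "nat (F b mod int p) = nat (F b' mod int p)"
    hence "F b mod int p = F b' mod int p" using assms(1) by (simp add: eq_nat_nat_iff)
    thus "b = b'" using assms(2)[OF bb(1,2)] by (auto simp: mod_eq_dvd_iff)
  qed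
  moreover have "(\<lambda>b. nat (F b mod int p)) ` B \<subseteq> {..<p}" using assms(1) by (auto simp: nat_less_iff)
  ultimately show ?thesis using card_inj_on_le[of _ B "{..<p}"] by fastforce
qed

lemma card_le_if_diffs_dvd_not_dvd_sq:
  fixes F :: "'b \<Rightarrow> int"
  assumes "p > 0"
    and "\<And>b b'. b \<in> B \<Longrightarrow> b' \<in> B \<Longrightarrow> int p dvd F b - F b'"
    and "\<And>b b'. b \<in> B \<Longrightarrow> b' \<in> B \<Longrightarrow> b \<noteq> b' \<Longrightarrow> \<not> int (p*p) dvd F b - F b'"
  shows "card B \<le> p"
proof (cases "B = {}")
  case False
  then obtain b0 where b0: "b0 \<in> B" by auto
  show ?thesis
  proof (rule card_le_if_diffs_not_dvd[OF assms(1), of _ "\<lambda>b. (F b - F b0) div int p"])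
    fix b b' assume bb: "b \<in> B" "b' \<in> B" "b \<noteq> b'"
    have "F b - F b' = int p * ((F b - F b0) div int p - (F b' - F b0) div int p)"
      using assms(2)[OF bb(1) b0] assms(2)[OF bb(2) b0] by (auto simp: algebra_simps elim!: dvdE)
    thus "\<not> int p dvd (F b - F b0) div int p - (F b' - F b0) div int p"
      using assms(3)[OF bb] by (metis mult_dvd_mono dvd_refl of_nat_mult)
  qed
qed simp

lemma sum_lessThan_mult_blocks:
  fixes g :: "nat \<Rightarrow> 'a::comm_monoid_add"
  shows "(\<Sum>i<m*p. g i) = (\<Sum>k<m. \<Sum>r<p. g (k*p + r))"
proof -
  have "sum g {k*p..<k*p+p} = (\<Sum>r<p. g (k*p + r))" for k
    using sum.shift_bounds_nat_ivl[of g 0 "k*p" p] by (simp add: lessThan_atLeast0 add.commute)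
  thus ?thesis by (simp add: sum.nat_group[where k=p, symmetric])
qed

lemma sum_comp_eq_sum_fibers:
  fixes h :: "'x \<Rightarrow> nat" and g :: "nat \<Rightarrow> 'c::comm_ring_1"
  assumes "finite X" and "\<forall>x\<in>X. h x < n"
  shows "(\<Sum>x\<in>X. g (h x)) = (\<Sum>j<n. of_nat (card {x\<in>X. h x = j}) * g j)"
proof -
  have "(\<Sum>x\<in>X. g (h x)) = (\<Sum>j<n. \<Sum>x\<in>{x\<in>X. h x = j}. g (h x))"
    using assms by (intro sum.group[symmetric]) auto
  also have "\<dots> = (\<Sum>j<n. \<Sum>x\<in>{x\<in>X. h x = j}. g j)"
    by (intro sum.cong refl) auto
  finally show ?thesis by simp
qed

lemma card_eq_sum_fibers:
  fixes f :: "'x \<Rightarrow> nat"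
  assumes fin: "finite X" and lt: "\<forall>x\<in>X. f x < p"
  shows "card X = (\<Sum>k<p. card {x\<in>X. f x = k})"
proof -
  have "int (card X) = (\<Sum>x\<in>X. (\<lambda>j. (1::int)) (f x))" by simp
  also have "\<dots> = (\<Sum>k<p. int (card {x\<in>X. f x = k}))"
    using sum_comp_eq_sum_fibers[OF fin lt, of "\<lambda>j. (1::int)"] by simp
  also have "\<dots> = int (\<Sum>k<p. card {x\<in>X. f x = k})" by simp
  finally show ?thesis by (simp only: of_nat_eq_iff)
qed

lemma inj_on_if_equal_fibers:
  fixes f :: "'x \<Rightarrow> nat"
  assumes fin: "finite X" and c: "card X = p" and lt: "\<forall>x\<in>X. f x < p"
    and eq: "\<forall>k<p. card {x\<in>X. f x = k} = card {x\<in>X. f x = 0}" and p0: "p > 0"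
  shows "inj_on f X"
proof -
  have "card X = (\<Sum>k<p. card {x\<in>X. f x = k})" by (rule card_eq_sum_fibers[OF fin lt])
  also have "\<dots> = (\<Sum>k<p. card {x\<in>X. f x = 0})"
    by (rule sum.cong[OF refl]) (use eq in blast)
  finally have "card X = (\<Sum>k<p. card {x\<in>X. f x = 0})" .
  hence "p = p * card {x\<in>X. f x = 0}" using c by simp
  moreover note p0
  ultimately have c0: "card {x\<in>X. f x = 0} = 1" by simp
  show ?thesis
  proof (rule inj_onI)
    fix x y assume x: "x \<in> X" and y: "y \<in> X" and e: "f x = f y"
    have "card {z\<in>X. f z = f x} = card {z\<in>X. f z = 0}" using eq lt x by blast
    hence "card {z\<in>X. f z = f x} = 1" using c0 by simp
    then obtain z where "{z'\<in>X. f z' = f x} = {z}" by (rule card_1_singletonE)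
    moreover have "x \<in> {z'\<in>X. f z' = f x}" "y \<in> {z'\<in>X. f z' = f x}" using x y e by auto
    ultimately show "x = y" by auto
  qed
qed

lemma image_eq_lessThan_if_inj:
  fixes f :: "'x \<Rightarrow> nat"
  assumes c: "card X = p" and lt: "\<forall>x\<in>X. f x < p" and inj: "inj_on f X"
  shows "f ` X = {..<p}"
proof -
  have "f ` X \<subseteq> {..<p}" using lt by auto
  moreover have "card (f ` X) = card {..<p}" using card_image[OF inj] c by simp
  ultimately show ?thesis by (simp add: card_subset_eq)
qed

lemma two_elemsE:
  assumes "finite B" and "card B \<ge> 2"
  obtains b b' where "b \<in> B" "b' \<in> B" "b \<noteq> b'"
proof -
  have "B \<noteq> {}" using assms by auto
  then obtain b where b: "b \<in> B" by auto
  have "card (B - {b}) \<ge> 1" using assms b by simp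
  hence "B - {b} \<noteq> {}" by (metis card.empty not_one_le_zero)
  then obtain b' where "b' \<in> B - {b}" by auto
  thus ?thesis using that b by auto
qed

lemma sum_fun_apply: "(sum F t) x = (\<Sum>w\<in>t. F w x)"
  for F :: "'b \<Rightarrow> 'a \<Rightarrow> 'c::comm_monoid_add"
  by (induction t rule: infinite_finite_induct) auto

lemma card_le_card_if_spanning:
  fixes phi :: "'b \<Rightarrow> 'a \<Rightarrow> complex"
  assumes fB: "finite B"
    and sp: "\<forall>f :: 'a \<Rightarrow> complex. \<exists>c. \<forall>a\<in>A. f a = (\<Sum>b\<in>B. c b * phi b a)"
  shows "card A \<le> card B"
proof -
  interpret V: vector_space "\<lambda>(c::complex) (f::'a \<Rightarrow> complex) x. c * f x"
    by unfold_locales (auto simp: fun_eq_iff algebra_simps)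
  define delta where "delta (a::'a) = (\<lambda>x. if x = a then (1::complex) else 0)" for a
  define r where "r b = (\<lambda>x. if x \<in> A then phi b x else 0)" for b
  have indep: "V.independent (delta ` A)"
    unfolding V.independent_explicit_module
  proof (intro allI impI, rule ccontr)
    fix t u v assume t: "finite t" "t \<subseteq> delta ` A" and s: "(\<Sum>v\<in>t. (\<lambda>x. u v * v x)) = 0"
      and v: "v \<in> t" "u v \<noteq> 0"
    obtain a where a: "a \<in> A" "v = delta a" using t v by auto
    have "0 = (\<Sum>w\<in>t. (\<lambda>x. u w * w x)) a" using s by simp
    also have "\<dots> = (\<Sum>w\<in>t. u w * w a)" by (simp add: sum_fun_apply)
    also have "\<dots> = u v * v a + (\<Sum>w\<in>t-{v}. u w * w a)" using t v by (simp add: sum.remove)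
    also have "(\<Sum>w\<in>t-{v}. u w * w a) = 0"
    proof (rule sum.neutral, rule ballI)
      fix w assume w: "w \<in> t - {v}"
      then obtain a' where a': "a' \<in> A" "w = delta a'" using t by auto
      hence "a' \<noteq> a" using w a by auto
      thus "u w * w a = 0" using a' by (simp add: delta_def)
    qed
    finally have "u v = 0" using a by (simp add: delta_def)
    thus False using v by simp
  qed
  have sub: "delta ` A \<subseteq> V.span (r ` B)"
  proof
    fix w assume "w \<in> delta ` A"
    then obtain a where a: "a \<in> A" "w = delta a" by auto
    obtain c where c: "\<forall>x\<in>A. delta a x = (\<Sum>b\<in>B. c b * phi b x)" using sp by blast
    have "w = (\<Sum>b\<in>B. (\<lambda>x. c b * r b x))"
    proof (rule ext)
      fix x
      show "w x = (\<Sum>b\<in>B. (\<lambda>x. c b * r b x)) x"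
        unfolding sum_fun_apply using c a by (cases "x \<in> A") (auto simp: r_def delta_def)
    qed
    also have "\<dots> \<in> V.span (r ` B)"
      by (intro V.span_sum V.span_scale V.span_base) auto
    finally show "w \<in> V.span (r ` B)" .
  qed
  have "card (delta ` A) \<le> card (r ` B)"
    using V.independent_span_bound[OF finite_imageI[OF fB] indep sub] by simp
  moreover have "inj_on delta A" unfolding delta_def inj_on_def by (metis fun_upd_same fun_upd_def zero_neq_one)
  hence "card (delta ` A) = card A" by (simp add: card_image)
  moreover have "card (r ` B) \<le> card B" by (rule card_image_le[OF fB])
  ultimately show ?thesis by simp
qed

section \<open>The cyclotomic polynomial of order \<open>p\<^sup>2\<close>\<close>

lemma eisenstein_irreducible:
  fixes F :: "int poly" and q :: int
  assumes q: "prime q" and deg: "degree F > 0" and monic: "lead_coeff F = 1"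
    and dvd_coeffs: "\<forall>i<degree F. q dvd coeff F i" and not_dvd_0: "\<not> q^2 dvd coeff F 0"
  shows "irreducible F"
proof (rule irreducibleI)
  show "F \<noteq> 0" "\<not> is_unit F" using deg by (auto simp: is_unit_poly_iff)
  fix f g assume Ffg: "F = f * g"
  show "is_unit f \<or> is_unit g"
  proof (rule ccontr)
    assume nu: "\<not> (is_unit f \<or> is_unit g)"
    have f0: "f \<noteq> 0" and g0: "g \<noteq> 0" using Ffg deg by auto
    have "lead_coeff f * lead_coeff g = 1" using Ffg monic by (simp add: lead_coeff_mult)
    hence lf: "is_unit (lead_coeff f)" and lg: "is_unit (lead_coeff g)"
      by (metis dvd_triv_left dvd_triv_right)+
    have npf: "\<not> q dvd lead_coeff f" and npg: "\<not> q dvd lead_coeff g"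
      using lf lg q by (meson dvd_trans not_prime_unit)+
    have degf: "degree f > 0"
    proof (rule ccontr)
      assume "\<not> degree f > 0"
      hence "f = [:lead_coeff f:]" by (metis degree_0_id gr0I)
      thus False using nu lf by (metis is_unit_const_poly_iff)
    qed
    have degg: "degree g > 0"
    proof (rule ccontr)
      assume "\<not> degree g > 0"
      hence "g = [:lead_coeff g:]" by (metis degree_0_id gr0I)
      thus False using nu lg by (metis is_unit_const_poly_iff)
    qed
    define i0 where "i0 = (LEAST i. \<not> q dvd coeff f i)"
    define j0 where "j0 = (LEAST i. \<not> q dvd coeff g i)"
    have i0: "\<not> q dvd coeff f i0" unfolding i0_def by (rule LeastI[of _ "degree f"]) (use npf in auto)
    have j0: "\<not> q dvd coeff g j0" unfolding j0_def by (rule LeastI[of _ "degree g"]) (use npg in auto)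
    have i0le: "i0 \<le> degree f" unfolding i0_def by (rule Least_le) (use npf in auto)
    have j0le: "j0 \<le> degree g" unfolding j0_def by (rule Least_le) (use npg in auto)
    have below_i0: "q dvd coeff f i" if "i < i0" for i using that not_less_Least i0_def by blast
    have below_j0: "q dvd coeff g i" if "i < j0" for i using that not_less_Least j0_def by blast
    define n where "n = i0 + j0"
    have coeff_n: "coeff F n = coeff f i0 * coeff g j0 + (\<Sum>i\<in>{..n}-{i0}. coeff f i * coeff g (n - i))"
      unfolding Ffg coeff_mult by (subst sum.remove[of _ i0]) (auto simp: n_def)
    have rest: "q dvd (\<Sum>i\<in>{..n}-{i0}. coeff f i * coeff g (n - i))"
    proof (rule dvd_sum)
      fix i assume "i \<in> {..n}-{i0}"
      hence "i < i0 \<or> n - i < j0" by (auto simp: n_def)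
      thus "q dvd coeff f i * coeff g (n - i)" using below_i0 below_j0 by auto
    qed
    have "n \<ge> degree F"
    proof (rule ccontr)
      assume "\<not> n \<ge> degree F"
      hence "q dvd coeff f i0 * coeff g j0" using dvd_coeffs coeff_n rest by (metis dvd_add_left_iff not_le)
      thus False using i0 j0 q by (meson prime_dvd_mult_iff)
    qed
    moreover have "degree F = degree f + degree g" using Ffg f0 g0 by (simp add: degree_mult_eq)
    ultimately have "i0 = degree f" "j0 = degree g" using i0le j0le by (auto simp: n_def)
    hence "q dvd coeff f 0" "q dvd coeff g 0" using below_i0 below_j0 degf degg by auto
    hence "q^2 dvd coeff f 0 * coeff g 0" by (simp add: power2_eq_square mult_dvd_mono)
    thus False using not_dvd_0 Ffg by (simp add: coeff_mult)
  qed
qed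

lemma pcompose_monom_one: "monom 1 n \<circ>\<^sub>p q = q ^ n"
proof (induction n)
  case 0 thus ?case by (simp add: monom_0 pcompose_1 one_pCons)
next
  case (Suc n)
  have "monom (1::'a) (Suc n) = [:0,1:] * monom 1 n" by (simp add: monom_Suc monom_0 mult_monom)
  thus ?case using Suc by (simp add: pcompose_mult pcompose_pCons)
qed

lemma prime_dvd_add_one_power_sub:
  fixes x :: "'a::comm_ring_1"
  assumes "prime p"
  shows "of_nat p dvd (x + 1)^p - x^p - 1"
proof -
  have p0: "p > 0" using assms prime_gt_0_nat by blast
  have "(x + 1)^p = (\<Sum>k\<le>p. of_nat (p choose k) * x^k)"
    by (simp add: binomial_ring)
  also have "{..p} = insert 0 (insert p {0<..<p})" using p0 by auto
  finally have "(x + 1)^p = (\<Sum>k\<in>{0<..<p}. of_nat (p choose k) * x^k) + x^p + 1"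
    using p0 by (simp add: algebra_simps)
  moreover have "of_nat p dvd (\<Sum>k\<in>{0<..<p}. of_nat (p choose k) * x^k)"
  proof (intro dvd_sum dvd_mult2)
    fix k assume "k \<in> {0<..<p}"
    hence "p dvd (p choose k)" using assms by (intro dvd_choose_prime) auto
    then obtain m where "p choose k = p * m" by (elim dvdE)
    thus "of_nat p dvd (of_nat (p choose k) :: 'a)" by simp
  qed
  ultimately show ?thesis by simp
qed

lemma dvd_power_diff: "(c::'a::comm_ring_1) dvd x - y \<Longrightarrow> c dvd x^k - y^k"
  by (metis dvd_mult2 power_diff_sumr2)

lemma const_poly_dvd_monom_mult_cancel:
  fixes F :: "'a::{comm_semiring_1,semiring_no_zero_divisors} poly"
  assumes "[:c:] dvd monom 1 m * F"
  shows "[:c:] dvd F"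
  unfolding const_poly_dvd_iff
proof
  fix i
  have "coeff (monom 1 m * F) (m + i) = coeff F i" by (simp add: coeff_monom_mult)
  thus "c dvd coeff F i" using assms unfolding const_poly_dvd_iff by metis
qed

text \<open>For prime \<open>p\<close> this is the \<open>p\<^sup>2\<close>-th cyclotomic polynomial \<open>(X^(p^2) - 1) / (X^p - 1)\<close>.\<close>

definition cyclotomic_p2 :: "nat \<Rightarrow> int poly" where
  "cyclotomic_p2 p = (\<Sum>k<p. monom 1 (k*p))"

lemma coeff_cyclotomic_p2:
  assumes "p > 0"
  shows "coeff (cyclotomic_p2 p) i = (if p dvd i \<and> i < p*p then 1 else 0)"
proof -
  have "coeff (cyclotomic_p2 p) i = (\<Sum>k<p. if k = i div p \<and> p dvd i then 1 else 0)"
    unfolding cyclotomic_p2_def coeff_sum coeff_monom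
    by (rule sum.cong) (use assms in \<open>auto simp: mult.commute\<close>)
  also have "\<dots> = (if p dvd i \<and> i < p*p then 1 else 0)"
  proof (cases "p dvd i")
    case True
    then obtain m where m: "i = p*m" by auto
    have "i div p < p \<longleftrightarrow> i < p*p" using assms unfolding m by simp
    thus ?thesis using True by (simp add: sum.delta)
  qed simp
  finally show ?thesis .
qed

lemma degree_cyclotomic_p2:
  assumes "p \<ge> 2"
  shows "degree (cyclotomic_p2 p) = p*(p-1)" and "lead_coeff (cyclotomic_p2 p) = 1"
proof -
  have p0: "p > 0" using assms by auto
  have top: "coeff (cyclotomic_p2 p) (p*(p-1)) = 1" using assms by (simp add: coeff_cyclotomic_p2)
  have "coeff (cyclotomic_p2 p) i = 0" if "i > p*(p-1)" for i
  proof (cases "p dvd i \<and> i < p*p")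
    case True
    then obtain k where k: "i = p*k" "k < p" by auto
    hence "p*k \<le> p*(p-1)" by simp
    thus ?thesis using that k by simp
  qed (simp add: coeff_cyclotomic_p2 p0)
  hence "degree (cyclotomic_p2 p) \<le> p*(p-1)" by (intro degree_le) auto
  moreover have "p*(p-1) \<le> degree (cyclotomic_p2 p)" using top by (intro le_degree) simp
  ultimately show deg: "degree (cyclotomic_p2 p) = p*(p-1)" by simp
  show "lead_coeff (cyclotomic_p2 p) = 1" using top deg by simp
qed

text \<open>By Frobenius, modulo \<open>p\<close> the shifted polynomial is \<open>((X+1)^(p^2) - 1) / ((X+1)^p - 1) = X^(p*(p-1))\<close>.\<close>

lemma cyclotomic_p2_shift_congruence:
  assumes p: "prime p"
  shows "of_nat p dvd cyclotomic_p2 p \<circ>\<^sub>p [:1,1:] - monom 1 (p*(p-1))"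
proof -
  define X :: "int poly" where "X = [:0,1:]"
  define Y :: "int poly" where "Y = monom 1 p"
  define S where "S = (\<Sum>k<p. (Y + 1)^k)"
  have XY: "X^p = Y" unfolding X_def Y_def by (simp add: monom_altdef)
  have Psi: "cyclotomic_p2 p \<circ>\<^sub>p [:1,1:] = (\<Sum>k<p. ((X + 1)^p)^k)"
    unfolding cyclotomic_p2_def pcompose_sum pcompose_monom_one X_def
    by (intro sum.cong refl) (simp add: one_pCons flip: power_mult, simp add: mult.commute)
  have "of_nat p dvd (X + 1)^p - (Y + 1)"
    using prime_dvd_add_one_power_sub[OF p, of X] XY by (simp add: algebra_simps)
  hence shift: "of_nat p dvd cyclotomic_p2 p \<circ>\<^sub>p [:1,1:] - S"
    unfolding Psi S_def sum_subtractf[symmetric] by (intro dvd_sum dvd_power_diff)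
  have "S * Y = (Y + 1)^p - 1" unfolding S_def by (simp add: power_diff_1_eq)
  moreover have "Y^p = Y * Y^(p-1)" using p prime_gt_0_nat by (metis power_eq_if not_gr0)
  ultimately have "monom 1 p * (S - Y^(p-1)) = (Y + 1)^p - Y^p - 1"
    unfolding Y_def by (simp add: algebra_simps)
  hence "[:of_nat p:] dvd monom 1 p * (S - Y^(p-1))"
    using prime_dvd_add_one_power_sub[OF p, of Y] by (simp add: of_nat_poly)
  hence "[:of_nat p:] dvd S - Y^(p-1)" by (rule const_poly_dvd_monom_mult_cancel)
  hence "of_nat p dvd S - monom 1 (p*(p-1))" unfolding Y_def by (simp add: monom_power of_nat_poly)
  from dvd_add[OF shift this] show ?thesis by simp
qed

lemma irreducible_cyclotomic_p2:
  assumes p: "prime p"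
  shows "irreducible (cyclotomic_p2 p)"
proof -
  have p2: "p \<ge> 2" using p prime_ge_2_nat by auto
  define q :: "int poly" where "q = [:1,1:]"
  define Psi where "Psi = cyclotomic_p2 p \<circ>\<^sub>p q"
  have dPsi: "degree Psi = p*(p-1)"
    unfolding Psi_def q_def degree_pcompose using degree_cyclotomic_p2[OF p2] by simp
  have lPsi: "lead_coeff Psi = 1"
    unfolding Psi_def q_def using degree_cyclotomic_p2[OF p2] by (subst lead_coeff_comp) auto
  have cong: "int p dvd coeff (Psi - monom 1 (p*(p-1))) i" for i
    using cyclotomic_p2_shift_congruence[OF p]
    unfolding Psi_def q_def of_nat_poly const_poly_dvd_iff by simp
  have dvd_coeffs: "\<forall>i<degree Psi. int p dvd coeff Psi i"
  proof (intro allI impI)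
    fix i assume "i < degree Psi"
    thus "int p dvd coeff Psi i" using cong[of i] dPsi by (simp add: coeff_monom)
  qed
  have "coeff Psi 0 = int p"
    unfolding Psi_def q_def poly_0_coeff_0[symmetric] poly_pcompose cyclotomic_p2_def
    by (simp add: poly_sum poly_monom)
  moreover have "\<not> (int p)^2 dvd int p"
  proof
    assume "(int p)^2 dvd int p"
    hence "int p * int p \<le> int p * 1" using p2 by (intro zdvd_imp_le) (auto simp: power2_eq_square)
    thus False using p2 by simp
  qed
  ultimately have "\<not> (int p)^2 dvd coeff Psi 0" by simp
  moreover have "degree Psi > 0" using dPsi p2 by simp
  ultimately have irr: "irreducible Psi"
    using eisenstein_irreducible[of "int p" Psi] p lPsi dvd_coeffs by simp
  have unit: "is_unit f" if u: "is_unit (f \<circ>\<^sub>p q)" for f :: "int poly"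
  proof -
    obtain c where c: "f \<circ>\<^sub>p q = [:c:]" "is_unit c" using is_unit_poly_iff[THEN iffD1, OF u] by blast
    hence "degree f = 0" using degree_pcompose[of f q] by (simp add: q_def)
    hence f: "f = [:coeff f 0:]" by (metis degree_0_id)
    hence "coeff f 0 = c" using c(1) by (metis pcompose_const pCons_eq_iff)
    thus "is_unit f" using f c(2) by (simp add: is_unit_const_poly_iff)
  qed
  show ?thesis
  proof (rule irreducibleI)
    show "cyclotomic_p2 p \<noteq> 0" "\<not> is_unit (cyclotomic_p2 p)"
      using degree_cyclotomic_p2[OF p2] p2 by (auto simp: is_unit_poly_iff)
    fix a b assume "cyclotomic_p2 p = a * b"
    hence "Psi = (a \<circ>\<^sub>p q) * (b \<circ>\<^sub>p q)" unfolding Psi_def by (simp add: pcompose_mult)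
    hence "is_unit (a \<circ>\<^sub>p q) \<or> is_unit (b \<circ>\<^sub>p q)" by (rule irreducibleD[OF irr])
    thus "is_unit a \<or> is_unit b" using unit by blast
  qed
qed

definition ipoly :: "int poly \<Rightarrow> complex \<Rightarrow> complex" where
  "ipoly F z = poly (map_poly of_int F) z"

lemma ipoly_mult: "ipoly (F * G) z = ipoly F z * ipoly G z"
proof -
  have "map_poly (of_int :: int \<Rightarrow> complex) (F * G) = map_poly of_int F * map_poly of_int G"
    by (rule poly_eqI) (simp add: coeff_map_poly coeff_mult of_int_sum)
  thus ?thesis unfolding ipoly_def by simp
qed

lemma ipoly_add: "ipoly (F + G) z = ipoly F z + ipoly G z"
proof -
  have "map_poly (of_int :: int \<Rightarrow> complex) (F + G) = map_poly of_int F + map_poly of_int G"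
    by (rule poly_eqI) (simp add: coeff_map_poly)
  thus ?thesis unfolding ipoly_def by simp
qed

lemma ipoly_smult: "ipoly (smult a F) z = of_int a * ipoly F z"
  unfolding ipoly_def by (simp add: map_poly_smult)

lemma ipoly_const: "ipoly [:c:] z = of_int c"
  unfolding ipoly_def by (cases "c = 0") (simp_all add: map_poly_pCons)

lemma ipoly_sum: "ipoly (sum f A) z = (\<Sum>x\<in>A. ipoly (f x) z)"
  by (induction A rule: infinite_finite_induct) (auto simp: ipoly_add, auto simp: ipoly_def)

lemma ipoly_monom: "ipoly (monom c n) z = of_int c * z^n"
  unfolding ipoly_def by (simp add: poly_monom map_poly_monom)

lemma prime_elem_degree_le_common_root:
  fixes P R :: "int poly"
  assumes P: "prime_elem P" and root: "ipoly P z = 0" and R: "R \<noteq> 0" "ipoly R z = 0"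
  shows "degree P \<le> degree R"
  using R
proof (induction "degree R" arbitrary: R rule: less_induct)
  case less
  show ?case
  proof (rule ccontr)
    assume lt: "\<not> degree P \<le> degree R"
    define r where "r = pseudo_mod P R"
    obtain a q where aq: "a \<noteq> 0" "smult a P = R * q + r"
      using pseudo_mod(1)[OF less.prems(1)] r_def by metis
    have rd: "r = 0 \<or> degree r < degree R" using pseudo_mod(2)[OF less.prems(1)] r_def by metis
    have "ipoly (smult a P) z = ipoly (R * q) z + ipoly r z" using aq by (simp add: ipoly_add)
    hence "ipoly r z = 0" using root less.prems by (simp add: ipoly_smult ipoly_mult)
    have "r = 0"
    proof (rule ccontr)
      assume "r \<noteq> 0"
      hence "degree P \<le> degree r" using less.hyps rd \<open>ipoly r z = 0\<close> by blast
      thus False using rd lt \<open>r \<noteq> 0\<close> by auto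
    qed
    hence "P dvd R * q" using aq by (metis add.right_neutral dvd_smult dvd_refl)
    hence "P dvd R \<or> P dvd q" using P by (simp add: prime_elem_dvd_mult_iff)
    thus False
    proof
      assume "P dvd R"
      thus False using dvd_imp_degree_le[OF _ less.prems(1)] lt by blast
    next
      assume "P dvd q"
      then obtain q' where "q = P * q'" by auto
      hence "P * [:a:] = P * (R * q')" using aq \<open>r = 0\<close> by (simp add: algebra_simps)
      hence e: "[:a:] = R * q'" using P by (metis mult_left_cancel prime_elem_not_zeroI)
      hence "q' \<noteq> 0" using aq by auto
      hence "degree R = 0" using e less.prems(1) by (metis add_eq_0_iff_both_eq_0 degree_mult_eq degree_pCons_0)
      hence R0: "R = [:coeff R 0:]" by (metis degree_0_id)
      hence "coeff R 0 \<noteq> 0" using less.prems(1) by (metis pCons_0_0)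
      moreover have "ipoly R z = of_int (coeff R 0)" by (subst R0) (rule ipoly_const)
      ultimately show False using less.prems(2) by simp
    qed
  qed
qed

section \<open>Vanishing sums of roots of unity of order \<open>p\<^sup>2\<close>\<close>

definition zeta :: "nat \<Rightarrow> int \<Rightarrow> complex" where
  "zeta p x = cis (2 * pi * real_of_int x / real (p^2))"

lemma zeta_add: "zeta p (x + y) = zeta p x * zeta p y"
  unfolding zeta_def by (simp add: cis_mult add_divide_distrib algebra_simps)

lemma zeta_diff: "zeta p (x - y) = zeta p x * cnj (zeta p y)"
  unfolding zeta_def by (simp add: cis_mult cis_cnj diff_divide_distrib algebra_simps)

lemma zeta_0 [simp]: "zeta p 0 = 1"
  unfolding zeta_def by simp

lemma zeta_nonzero [simp]: "zeta p x \<noteq> 0"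
  unfolding zeta_def by simp

lemma zeta_mult_cnj [simp]: "zeta p x * cnj (zeta p x) = 1"
  using zeta_diff[of p x x] by simp

lemma zeta_power: "zeta p x ^ k = zeta p (int k * x)"
  by (induction k) (auto simp: zeta_add algebra_simps)

lemma zeta_eq_1_iff:
  assumes "p > 0"
  shows "zeta p x = 1 \<longleftrightarrow> int (p*p) dvd x"
proof
  assume "int (p*p) dvd x"
  then obtain k where k: "x = int (p*p) * k" by (auto elim!: dvdE)
  have "2 * pi * real_of_int x / real (p^2) = 2 * pi * real_of_int k"
    unfolding k using assms by (simp add: field_simps power2_eq_square)
  thus "zeta p x = 1" unfolding zeta_def by simp
next
  assume "zeta p x = 1"
  hence "cos (2 * pi * real_of_int x / real (p^2)) = 1" unfolding zeta_def
    by (metis complex.sel(1) cis.sel(1) one_complex.sel(1))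
  then obtain n :: int where "2 * pi * real_of_int x / real (p^2) = real_of_int n * 2 * pi"
    by (metis cos_one_2pi_int)
  hence "real_of_int x = real_of_int n * real (p*p)" using assms pi_gt_zero
    by (simp add: field_simps power2_eq_square)
  hence "x = n * int (p*p)" by (metis of_int_eq_iff of_int_mult of_int_of_nat_eq)
  thus "int (p*p) dvd x" by simp
qed

lemma zeta_cong:
  assumes "p > 0" and "x mod int (p*p) = y mod int (p*p)"
  shows "zeta p x = zeta p y"
proof -
  have "zeta p (x - y) = 1" using assms by (simp add: zeta_eq_1_iff mod_eq_dvd_iff)
  hence "zeta p x * (cnj (zeta p y) * zeta p y) = zeta p y" by (simp add: zeta_diff mult.assoc[symmetric])
  moreover have "cnj (zeta p y) * zeta p y = 1" using zeta_mult_cnj[of p y] by (simp only: mult.commute)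
  ultimately show ?thesis by simp
qed

lemma zeta_p_mult_cong:
  assumes "p > 0" and "int p dvd x - y"
  shows "zeta p (int p * x) = zeta p (int p * y)"
proof (rule zeta_cong[OF assms(1)])
  obtain k where "x - y = int p * k" using assms(2) by (auto elim!: dvdE)
  hence "int p * x - int p * y = int (p*p) * k" by (simp add: algebra_simps)
  hence "int (p*p) dvd int p * x - int p * y" by (metis dvd_triv_left)
  thus "int p * x mod int (p*p) = int p * y mod int (p*p)" by (simp only: mod_eq_dvd_iff)
qed

lemma zeta_geometric_sum:
  assumes "zeta p m \<noteq> 1" and "zeta p (int N * m) = 1"
  shows "(\<Sum>k<N. zeta p (int k * m)) = 0"
proof -
  have "(\<Sum>k<N. zeta p (int k * m)) = (\<Sum>k<N. zeta p m ^ k)" by (simp add: zeta_power)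
  also have "\<dots> = (zeta p m ^ N - 1) / (zeta p m - 1)" using assms(1) by (rule geometric_sum)
  also have "\<dots> = 0" using assms by (simp add: zeta_power)
  finally show ?thesis .
qed

lemma zeta_period_sum:
  assumes "p > 0" and "m \<noteq> 0" and "\<bar>m\<bar> < int (p*p)"
  shows "(\<Sum>k<p*p. zeta p (int k * m)) = 0"
proof (rule zeta_geometric_sum)
  show "zeta p m \<noteq> 1"
  proof
    assume "zeta p m = 1"
    hence "int (p*p) dvd m" using assms(1) zeta_eq_1_iff by blast
    thus False using dvd_abs_less_eq_0 assms(2,3) by blast
  qed
  show "zeta p (int (p*p) * m) = 1" using assms by (simp add: zeta_eq_1_iff)
qed

lemma zeta_subperiod_sum:
  assumes "p > 0" and "\<not> int p dvd m"
  shows "(\<Sum>k<p. zeta p (int k * (int p * m))) = 0"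
proof (rule zeta_geometric_sum)
  show "zeta p (int p * m) \<noteq> 1" using assms by (simp add: zeta_eq_1_iff)
  show "zeta p (int p * (int p * m)) = 1" using assms by (simp add: zeta_eq_1_iff)
qed

lemma ipoly_cyclotomic_p2_zeta:
  assumes p: "prime p"
  shows "ipoly (cyclotomic_p2 p) (zeta p 1) = 0"
proof -
  have p0: "p > 0" using p prime_gt_0_nat by blast
  have "ipoly (cyclotomic_p2 p) (zeta p 1) = (\<Sum>k<p. zeta p (int k * (int p * 1)))"
    unfolding cyclotomic_p2_def by (simp add: ipoly_sum ipoly_monom zeta_power mult.commute)
  also have "\<dots> = 0" using p0 prime_gt_1_nat[OF p] by (intro zeta_subperiod_sum) auto
  finally show ?thesis .
qed

text \<open>Since \<open>\<Phi>_(p\<^sup>2)\<close> is the minimal polynomial of a root \<open>z\<close>, an integer relation of degree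
  \<open>< p\<^sup>2\<close> on the powers of \<open>z\<close> is a multiple of \<open>\<Phi>_(p\<^sup>2)\<close>, i.e. its coefficients are \<open>p\<close>-periodic.\<close>

lemma cyclotomic_p2_root_vanishing_sum:
  assumes p: "prime p" and root: "ipoly (cyclotomic_p2 p) z = 0"
    and vanish: "(\<Sum>j<p*p. of_int (c j) * z^j) = 0" and j: "j < p*p"
  shows "c j = c (p*(p-1) + j mod p)"
proof -
  have p2: "p \<ge> 2" using p prime_ge_2_nat by auto
  define N where "N = p*(p-1)"
  define e where "e r = c (N + r)" for r
  define R where "R = (\<Sum>i<N. monom (c i - e (i mod p)) i)"
  have pN: "p*p = N + p" unfolding N_def using p2 by (simp add: algebra_simps)
  have top: "i mod p = i - N" if "N \<le> i" "i < p*p" for i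
  proof -
    have "i = (p-1)*p + (i - N)" "i - N < p" using that pN unfolding N_def by (auto simp: mult.commute)
    thus ?thesis by (metis mod_mult_self3 mod_less)
  qed
  have "ipoly R z = (\<Sum>i<N. of_int (c i - e (i mod p)) * z^i)"
    unfolding R_def by (simp add: ipoly_sum ipoly_monom)
  also have "\<dots> = (\<Sum>i<p*p. of_int (c i - e (i mod p)) * z^i)"
    using top pN by (intro sum.mono_neutral_left) (auto simp: e_def)
  also have "\<dots> = - (\<Sum>i<p*p. of_int (e (i mod p)) * z^i)"
    using vanish by (simp add: algebra_simps sum_subtractf)
  also have "(\<Sum>i<p*p. of_int (e (i mod p)) * z^i) = (\<Sum>r<p. of_int (e r) * z^r) * ipoly (cyclotomic_p2 p) z"
  proof -
    have "(\<Sum>i<p*p. of_int (e (i mod p)) * z^i) = (\<Sum>k<p. \<Sum>r<p. of_int (e r) * z^r * z^(k*p))"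
      unfolding sum_lessThan_mult_blocks by (simp add: power_add algebra_simps)
    thus ?thesis unfolding cyclotomic_p2_def ipoly_sum ipoly_monom sum_product
      by (subst sum.swap) simp
  qed
  finally have "ipoly R z = 0" using root by simp
  have "R = 0"
  proof (rule ccontr)
    assume "R \<noteq> 0"
    hence "degree (cyclotomic_p2 p) \<le> degree R"
      using prime_elem_degree_le_common_root[OF irreducible_imp_prime_poly[OF irreducible_cyclotomic_p2[OF p]]
          root _ \<open>ipoly R z = 0\<close>] by blast
    moreover have "degree R \<le> N - 1" unfolding R_def
      by (rule degree_sum_le) (auto intro: order.trans[OF degree_monom_le])
    moreover have "N > 0" unfolding N_def using p2 by simp
    ultimately show False using degree_cyclotomic_p2(1)[OF p2] unfolding N_def by linarith
  qed
  show ?thesis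
  proof (cases "j < N")
    case True
    have "coeff R j = c j - e (j mod p)" unfolding R_def coeff_sum using True
      by (simp add: coeff_monom sum.delta)
    thus ?thesis using \<open>R = 0\<close> unfolding e_def N_def by simp
  next
    case False
    thus ?thesis using top[OF _ j] unfolding N_def by simp
  qed
qed

text \<open>A vanishing sum of \<open>p\<^sup>2\<close>-th roots of unity is a union of full cosets of the order-\<open>p\<close> subgroup,
  taken with multiplicity: exponents in the same class mod \<open>p\<close> occur equally often.\<close>

lemma vanishing_zeta_sum_fibers:
  fixes f :: "'x \<Rightarrow> int"
  assumes p: "prime p" and fin: "finite X" and vanish: "(\<Sum>x\<in>X. zeta p (f x)) = 0"
  shows "\<And>j j'. j < p*p \<Longrightarrow> j' < p*p \<Longrightarrow> j mod p = j' mod p \<Longrightarrow>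
            card {x\<in>X. nat (f x mod int (p*p)) = j} = card {x\<in>X. nat (f x mod int (p*p)) = j'}"
    and "p dvd card X"
proof -
  have p0: "p > 0" using p prime_gt_0_nat by blast
  define h where "h x = nat (f x mod int (p*p))" for x
  define cnt where "cnt j = card {x\<in>X. h x = j}" for j
  have h_lt: "\<forall>x\<in>X. h x < p*p" unfolding h_def using p0 by (auto simp: nat_less_iff)
  have "zeta p (f x) = zeta p 1 ^ h x" for x
  proof -
    have "zeta p (f x) = zeta p (int (h x))" unfolding h_def using p0 by (intro zeta_cong) auto
    thus ?thesis by (simp add: zeta_power)
  qed
  hence "(\<Sum>x\<in>X. zeta p (f x)) = (\<Sum>j<p*p. of_nat (cnt j) * zeta p 1 ^ j)"
    unfolding cnt_def using sum_comp_eq_sum_fibers[OF fin h_lt, of "\<lambda>j. zeta p 1 ^ j"] by simp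
  hence "(\<Sum>j<p*p. of_int (int (cnt j)) * zeta p 1 ^ j) = 0" using vanish by simp
  note periodic = cyclotomic_p2_root_vanishing_sum[OF p ipoly_cyclotomic_p2_zeta[OF p] this]
  show "card {x\<in>X. nat (f x mod int (p*p)) = j} = card {x\<in>X. nat (f x mod int (p*p)) = j'}"
    if "j < p*p" "j' < p*p" "j mod p = j' mod p" for j j'
    using periodic[OF that(1)] periodic[OF that(2)] that(3) unfolding cnt_def h_def by simp
  have "int (card X) = (\<Sum>j<p*p. int (cnt j))"
    unfolding cnt_def using sum_comp_eq_sum_fibers[OF fin h_lt, of "\<lambda>j. (1::int)"] by simp
  also have "\<dots> = (\<Sum>k<p. \<Sum>r<p. int (cnt (k*p + r)))"
    by (rule sum_lessThan_mult_blocks)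
  also have "\<dots> = (\<Sum>k<p. \<Sum>r<p. int (cnt (p*(p-1) + r)))"
    using periodic mult_add_less_sq by (intro sum.cong refl) auto
  finally have "int p dvd int (card X)" by simp
  thus "p dvd card X" by simp
qed

definition periodic_mod_sq :: "nat \<Rightarrow> nat set \<Rightarrow> bool" where
  "periodic_mod_sq p X \<longleftrightarrow> (\<forall>t\<in>X. (t + p) mod (p*p) \<in> X)"

definition equidistributed_mod :: "nat \<Rightarrow> nat set \<Rightarrow> bool" where
  "equidistributed_mod p X \<longleftrightarrow> (\<forall>r<p. card {t\<in>X. t mod p = r} = card {t\<in>X. t mod p = 0})"

lemma cyclic_vanishing_sum_card_dvd:
  assumes "prime p" and "X \<subseteq> {..<p*p}" and "(\<Sum>t\<in>X. zeta p (int t * D)) = 0"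
  shows "p dvd card X"
  using vanishing_zeta_sum_fibers(2)[OF assms(1) _ assms(3)] assms(2) finite_subset by blast

lemma cyclic_vanishing_sum_not_dvd:
  assumes "p > 0" and "finite X" and "X \<noteq> {}" and vanish: "(\<Sum>t\<in>X. zeta p (int t * D)) = 0"
  shows "\<not> int (p*p) dvd D"
proof
  assume "int (p*p) dvd D"
  hence "zeta p (int t * D) = 1" for t using assms(1) by (simp add: zeta_eq_1_iff)
  thus False using vanish assms(2,3) by simp
qed

lemma cyclic_vanishing_sum_periodic:
  assumes p: "prime p" and X: "X \<subseteq> {..<p*p}" and vanish: "(\<Sum>t\<in>X. zeta p (int t * D)) = 0"
    and not_dvd: "\<not> int p dvd D"
  shows "periodic_mod_sq p X"
  unfolding periodic_mod_sq_def
proof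
  fix t assume t: "t \<in> X"
  have p0: "p > 0" using p prime_gt_0_nat by blast
  have fin: "finite X" using X finite_subset by blast
  define f where "f t = int t * D" for t
  define fiber where "fiber j = {x\<in>X. nat (f x mod int (p*p)) = j}" for j
  define t' where "t' = (t + p) mod (p*p)"
  define j0 where "j0 = nat (f t mod int (p*p))"
  define j1 where "j1 = nat (f t' mod int (p*p))"
  have "int t' mod int p = int t mod int p"
    unfolding t'_def by (simp add: of_nat_mod mod_mod_cancel)
  hence "f t' mod int p = f t mod int p" unfolding f_def by (rule mod_mult_cong) simp
  hence "j1 mod p = j0 mod p" unfolding j0_def j1_def using nat_mod_mod_sq[OF p0] by (metis of_nat_eq_iff)
  moreover have "j0 < p*p" "j1 < p*p" unfolding j0_def j1_def using p0 by (simp_all add: nat_less_iff)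
  ultimately have "card (fiber j1) = card (fiber j0)"
    using vanishing_zeta_sum_fibers(1)[OF p fin vanish[folded f_def]] unfolding fiber_def by blast
  moreover have "t \<in> fiber j0" using t unfolding fiber_def j0_def by simp
  hence "card (fiber j0) > 0" using fin unfolding fiber_def by (auto simp: card_gt_0_iff)
  ultimately have "fiber j1 \<noteq> {}" by auto
  then obtain t'' where "t'' \<in> X" "nat (f t'' mod int (p*p)) = j1" unfolding fiber_def by auto
  hence t'': "t'' \<in> X" "f t'' mod int (p*p) = f t' mod int (p*p)" unfolding j1_def using p0
    by (metis eq_nat_nat_iff pos_mod_sign of_nat_0_less_iff mult_pos_pos)+
  hence "int (p*p) dvd (int t'' - int t') * D" unfolding f_def
    by (simp add: mod_eq_dvd_iff algebra_simps)
  hence "int (p*p) dvd int t'' - int t'"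
    using coprime_sq_if_not_dvd[OF p not_dvd] by (metis coprime_commute coprime_dvd_mult_left_iff)
  moreover have "t'' < p*p" "t' < p*p" using X t''(1) p0 unfolding t'_def by auto
  ultimately have "t'' = t'" by (rule nat_eq_if_dvd_diff)
  thus "(t + p) mod (p*p) \<in> X" using t'' t'_def by simp
qed

lemma cyclic_vanishing_sum_equidistributed:
  assumes p: "prime p" and X: "X \<subseteq> {..<p*p}" and vanish: "(\<Sum>t\<in>X. zeta p (int t * D)) = 0"
    and dvd: "int p dvd D"
  shows "equidistributed_mod p X"
proof (cases "X = {}")
  case False
  have p0: "p > 0" using p prime_gt_0_nat by blast
  have fin: "finite X" using X finite_subset by blast
  obtain D' where D': "D = int p * D'" using dvd by (auto elim!: dvdE)
  have nd': "\<not> int p dvd D'"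
    using cyclic_vanishing_sum_not_dvd[OF p0 fin False vanish] unfolding D' by auto
  define f where "f t = int t * D" for t
  define g where "g r = p * nat ((int r * D') mod int p)" for r
  have fiber: "{t\<in>X. t mod p = r} = {t\<in>X. nat (f t mod int (p*p)) = g r}" if r: "r < p" for r
  proof -
    have f: "f t mod int (p*p) = int p * ((int t * D') mod int p)" for t
      unfolding f_def D' by (simp add: mod_mult_mult1 algebra_simps)
    have "t mod p = r \<longleftrightarrow> (int t * D') mod int p = (int r * D') mod int p" for t
    proof
      assume "t mod p = r"
      hence "int t mod int p = int r mod int p" using r by (simp add: zmod_int[symmetric])
      thus "(int t * D') mod int p = (int r * D') mod int p" by (rule mod_mult_cong) simp
    next
      assume "(int t * D') mod int p = (int r * D') mod int p"
      hence "int p dvd (int t - int r) * D'" by (simp add: mod_eq_dvd_iff algebra_simps)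
      hence "int p dvd int t - int r" using p nd' by (simp add: prime_dvd_mult_iff)
      hence "int t mod int p = int r mod int p" by (simp add: mod_eq_dvd_iff)
      thus "t mod p = r" using r by (simp add: zmod_int[symmetric])
    qed
    moreover have "nat (f t mod int (p*p)) = g r \<longleftrightarrow> (int t * D') mod int p = (int r * D') mod int p" for t
      unfolding f g_def using p0 nat_mult_eq_iff[OF p0] by simp
    ultimately show ?thesis by auto
  qed
  show ?thesis unfolding equidistributed_mod_def
  proof (intro allI impI)
    fix r assume r: "r < p"
    have "g r < p*p" "g 0 = 0" unfolding g_def using p0 by (simp_all add: nat_less_iff)
    thus "card {t\<in>X. t mod p = r} = card {t\<in>X. t mod p = 0}"
      unfolding fiber[OF r] fiber[OF p0]
      using vanishing_zeta_sum_fibers(1)[OF p fin vanish[folded f_def], of "g r" 0] p0 by (simp add: g_def)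
  qed
qed (simp add: equidistributed_mod_def)

definition linform :: "int \<Rightarrow> int \<Rightarrow> nat \<times> nat \<Rightarrow> int" where
  "linform D1 D2 x = int (fst x) * D1 + int (snd x) * D2"

lemma zeta_p_mult_linform_eq_1:
  assumes "p > 0" and "int p dvd D1" and "int p dvd D2"
  shows "zeta p (int p * linform D1 D2 x) = 1"
  using zeta_p_mult_cong[OF assms(1), of "linform D1 D2 x" 0] assms(2,3) by (simp add: linform_def)

lemma zeta_plane_sum_eq_0:
  assumes p0: "p > 0" and "\<not> (int p dvd m1 \<and> int p dvd m2)"
  shows "(\<Sum>x\<in>{..<p} \<times> {..<p}. zeta p (int p * linform m1 m2 x)) = 0"
proof -
  have "(\<Sum>x\<in>{..<p} \<times> {..<p}. zeta p (int p * linform m1 m2 x)) =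
        (\<Sum>s<p. zeta p (int s * (int p * m1))) * (\<Sum>u<p. zeta p (int u * (int p * m2)))"
    unfolding linform_def sum_product sum.cartesian_product
    by (intro sum.cong refl) (auto simp: zeta_add[symmetric] algebra_simps)
  thus ?thesis using zeta_subperiod_sum[OF p0, of m1] zeta_subperiod_sum[OF p0, of m2] assms(2) by auto
qed

lemma planar_vanishing_sum_card_dvd:
  assumes "prime p" and "Y \<subseteq> {..<p} \<times> {..<p}" and "(\<Sum>x\<in>Y. zeta p (int p * linform D1 D2 x)) = 0"
  shows "p dvd card Y"
  using vanishing_zeta_sum_fibers(2)[OF assms(1) _ assms(3)] assms(2) finite_subset by blast

lemma planar_vanishing_sum_nonzero:
  assumes "p > 0" and "finite Y" and "Y \<noteq> {}" and vanish: "(\<Sum>x\<in>Y. zeta p (int p * linform D1 D2 x)) = 0"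
  shows "\<not> (int p dvd D1 \<and> int p dvd D2)"
proof
  assume "int p dvd D1 \<and> int p dvd D2"
  hence "(\<Sum>x\<in>Y. zeta p (int p * linform D1 D2 x)) = of_nat (card Y)"
    using zeta_p_mult_linform_eq_1[OF assms(1)] by simp
  thus False using vanish assms(2,3) by simp
qed

lemma planar_vanishing_sum_equidistributed:
  assumes p: "prime p" and Y: "Y \<subseteq> {..<p} \<times> {..<p}"
    and vanish: "(\<Sum>x\<in>Y. zeta p (int p * linform D1 D2 x)) = 0" and k: "k < p"
  shows "card {x\<in>Y. nat (linform D1 D2 x mod int p) = k} = card {x\<in>Y. nat (linform D1 D2 x mod int p) = 0}"
proof -
  have p0: "p > 0" using p prime_gt_0_nat by blast
  have fin: "finite Y" using Y finite_subset by (metis finite_SigmaI finite_lessThan)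
  define f where "f x = int p * linform D1 D2 x" for x
  have fiber: "{x\<in>Y. nat (linform D1 D2 x mod int p) = j} = {x\<in>Y. nat (f x mod int (p*p)) = p * j}" for j
  proof -
    have "f x mod int (p*p) = int p * (linform D1 D2 x mod int p)" for x
      unfolding f_def by (simp only: of_nat_mult mod_mult_mult1)
    moreover have "nat (int p * (linform D1 D2 x mod int p)) = p * j \<longleftrightarrow> nat (linform D1 D2 x mod int p) = j" for x
      using p0 nat_mult_eq_iff[OF p0, of "linform D1 D2 x mod int p" j] by auto
    ultimately show ?thesis by auto
  qed
  have "p*k < p*p" using k p0 by simp
  thus ?thesis unfolding fiber
    using vanishing_zeta_sum_fibers(1)[OF p fin vanish[folded f_def], of "p*k" "p*0"] p0 by simp
qed

lemma planar_vanishing_sum_scale: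
  assumes p: "prime p" and Y: "Y \<subseteq> {..<p} \<times> {..<p}"
    and vanish: "(\<Sum>x\<in>Y. zeta p (int p * linform D1 D2 x)) = 0" and k: "\<not> int p dvd k"
  shows "(\<Sum>x\<in>Y. zeta p (int p * (k * linform D1 D2 x))) = 0"
proof -
  have p0: "p > 0" using p prime_gt_0_nat by blast
  have fin: "finite Y" using Y finite_subset by (metis finite_SigmaI finite_lessThan)
  define f where "f x = nat (linform D1 D2 x mod int p)" for x
  have "zeta p (int p * (k * linform D1 D2 x)) = zeta p (int (f x) * (int p * k))" for x
  proof -
    have "int p dvd k * linform D1 D2 x - int (f x) * k"
      using dvd_mult[OF dvd_nat_mod_diff[OF p0, of "linform D1 D2 x"], of k]
      unfolding f_def by (simp add: algebra_simps dvd_diff_commute)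
    from zeta_p_mult_cong[OF p0 this] show ?thesis by (simp add: algebra_simps)
  qed
  hence "(\<Sum>x\<in>Y. zeta p (int p * (k * linform D1 D2 x))) = (\<Sum>j<p. of_nat (card {x\<in>Y. f x = j}) * zeta p (int j * (int p * k)))"
    using sum_comp_eq_sum_fibers[OF fin, of f p "\<lambda>j. zeta p (int j * (int p * k))"] p0
    by (simp add: f_def nat_less_iff)
  also have "\<dots> = of_nat (card {x\<in>Y. f x = 0}) * (\<Sum>j<p. zeta p (int j * (int p * k)))"
    using planar_vanishing_sum_equidistributed[OF p Y vanish] unfolding f_def sum_distrib_left
    by (intro sum.cong refl) auto
  finally show ?thesis using zeta_subperiod_sum[OF p0 k] by simp
qed

section \<open>Characters, tiles and spectra\<close>

lemma grpG_eq_Times: "grpG p = {..<p*p} \<times> {..<p}"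
  unfolding grpG_def by (auto simp: power2_eq_square)

lemma finite_grpG: "finite (grpG p)" unfolding grpG_eq_Times by simp

lemma card_grpG: "card (grpG p) = p^3"
  unfolding grpG_eq_Times by (simp add: card_cartesian_product power2_eq_square power3_eq_cube)

lemma gadd_in_grpG: "p > 0 \<Longrightarrow> gadd p x y \<in> grpG p"
  unfolding gadd_def grpG_def by simp

lemma gadd_left_cancel:
  assumes "t \<in> grpG p" and "t' \<in> grpG p" and "gadd p a t = gadd p a t'"
  shows "t = t'"
proof -
  have e: "(fst a + fst t) mod p^2 = (fst a + fst t') mod p^2" "(snd a + snd t) mod p = (snd a + snd t') mod p"
    using assms(3) unfolding gadd_def by simp_all
  have "fst t = fst t'"
    using dvd_diff_if_mod_eq[OF e(1)] assms(1,2) by (intro nat_eq_if_dvd_diff[of "p^2"]) (auto simp: grpG_def)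
  moreover have "snd t = snd t'"
    using dvd_diff_if_mod_eq[OF e(2)] assms(1,2) by (intro nat_eq_if_dvd_diff[of p]) (auto simp: grpG_def)
  ultimately show ?thesis by (simp add: prod_eq_iff)
qed

lemma chiG_zeta:
  assumes "p > 0"
  shows "chiG p b a = zeta p (int (fst a * fst b) + int p * int (snd a * snd b))"
proof -
  define r where "r = real (fst a * fst b) / real (p^2) + real (snd a * snd b) / real p"
  have r: "r = real_of_int (int (fst a * fst b) + int p * int (snd a * snd b)) / real (p^2)"
    unfolding r_def using assms by (simp add: field_simps power2_eq_square)
  have "chiG p b a = exp (\<i> * complex_of_real (2 * pi * r))"
    unfolding chiG_def r_def by (simp add: algebra_simps)
  also have "\<dots> = cis (2 * pi * r)" by (simp add: cis_conv_exp)
  finally show ?thesis unfolding zeta_def r by (simp add: mult.assoc)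
qed

lemma chiG_commute: "chiG p b a = chiG p a b"
  unfolding chiG_def by (simp add: mult.commute)

lemma chiG_zero: "p > 0 \<Longrightarrow> chiG p (0,0) a = 1"
  by (simp add: chiG_zeta)

lemma chiG_gadd:
  assumes p0: "p > 0"
  shows "chiG p d (gadd p a t) = chiG p d a * chiG p d t"
proof -
  define x where "x = int (((fst a + fst t) mod p^2) * fst d) + int p * int (((snd a + snd t) mod p) * snd d)"
  define y where "y = int ((fst a + fst t) * fst d) + int p * int ((snd a + snd t) * snd d)"
  have "x mod int (p*p) = y mod int (p*p)"
  proof -
    have e1: "int (((fst a + fst t) mod p^2) * fst d) mod int (p*p) = int ((fst a + fst t) * fst d) mod int (p*p)"
    proof -
      have h: "int ((fst a + fst t) mod p^2) = (int (fst a + fst t)) mod int (p*p)"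
        by (simp only: of_nat_mod power2_eq_square)
      have "int (((fst a + fst t) mod p^2) * fst d) = (int (fst a + fst t) mod int (p*p)) * int (fst d)"
        by (simp only: of_nat_mult h)
      hence "int (((fst a + fst t) mod p^2) * fst d) mod int (p*p) = (int (fst a + fst t) * int (fst d)) mod int (p*p)"
        by (simp only: mod_mult_left_eq)
      thus ?thesis by (simp only: of_nat_mult)
    qed
    have e2: "(int p * int (((snd a + snd t) mod p) * snd d)) mod int (p*p) = (int p * int ((snd a + snd t) * snd d)) mod int (p*p)"
      using mult_mod_sq_cong[of p "int (snd a + snd t)" "int (snd d)"] by (simp add: of_nat_mod)
    show ?thesis unfolding x_def y_def using e1 e2 by (metis mod_add_cong)
  qed
  hence "zeta p x = zeta p y" by (rule zeta_cong[OF p0])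
  moreover have "chiG p d (gadd p a t) = zeta p x" unfolding x_def chiG_zeta[OF p0] gadd_def by simp
  moreover have "chiG p d a * chiG p d t = zeta p y"
    unfolding y_def chiG_zeta[OF p0] zeta_add[symmetric] by (simp add: algebra_simps)
  ultimately show ?thesis by simp
qed

lemma chiG_mult_cnj:
  assumes p0: "p > 0"
  shows "chiG p x d * cnj (chiG p y d) =
         zeta p (int (fst d) * (int (fst x) - int (fst y))) * zeta p (int (snd d) * (int p * (int (snd x) - int (snd y))))"
proof -
  have "chiG p x d * cnj (chiG p y d) =
        zeta p ((int (fst d * fst x) + int p * int (snd d * snd x)) - (int (fst d * fst y) + int p * int (snd d * snd y)))"
    unfolding chiG_zeta[OF p0] zeta_diff by simp
  also have "(int (fst d * fst x) + int p * int (snd d * snd x)) - (int (fst d * fst y) + int p * int (snd d * snd y))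
      = int (fst d) * (int (fst x) - int (fst y)) + int (snd d) * (int p * (int (snd x) - int (snd y)))"
    by (simp add: algebra_simps)
  finally show ?thesis by (simp add: zeta_add)
qed

lemma chiG_orthogonal:
  assumes p0: "p > 0" and x: "x \<in> grpG p" and y: "y \<in> grpG p"
  shows "(\<Sum>d\<in>grpG p. chiG p x d * cnj (chiG p y d)) = (if x = y then of_nat (p^3) else 0)"
proof -
  define m1 where "m1 = int (fst x) - int (fst y)"
  define m2 where "m2 = int (snd x) - int (snd y)"
  have "(\<Sum>d\<in>grpG p. chiG p x d * cnj (chiG p y d)) =
        (\<Sum>d\<in>{..<p*p} \<times> {..<p}. zeta p (int (fst d) * m1) * zeta p (int (snd d) * (int p * m2)))"
    unfolding grpG_eq_Times m1_def m2_def by (intro sum.cong refl) (rule chiG_mult_cnj[OF p0])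
  also have "\<dots> = (\<Sum>d1<p*p. zeta p (int d1 * m1)) * (\<Sum>d2<p. zeta p (int d2 * (int p * m2)))"
    by (simp add: sum_product sum.cartesian_product split_def)
  finally have eq: "(\<Sum>d\<in>grpG p. chiG p x d * cnj (chiG p y d)) =
     (\<Sum>d1<p*p. zeta p (int d1 * m1)) * (\<Sum>d2<p. zeta p (int d2 * (int p * m2)))" .
  have bounds: "fst x < p*p" "fst y < p*p" "snd x < p" "snd y < p"
    using x y by (auto simp: grpG_eq_Times)
  show ?thesis
  proof (cases "x = y")
    case True
    thus ?thesis using eq by (simp add: m1_def m2_def power3_eq_cube)
  next
    case False
    hence "m1 \<noteq> 0 \<or> \<not> int p dvd m2"
      using nat_eq_if_dvd_diff[of p "snd x" "snd y"] bounds unfolding m1_def m2_def by (auto simp: prod_eq_iff)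
    moreover have "\<bar>m1\<bar> < int (p*p)" using bounds unfolding m1_def by linarith
    ultimately show ?thesis
      using eq False zeta_period_sum[OF p0, of m1] zeta_subperiod_sum[OF p0, of m2] by auto
  qed
qed

lemma sum_chiG_eq_0:
  assumes p0: "p > 0" and d: "d \<in> grpG p" "d \<noteq> (0,0)"
  shows "(\<Sum>g\<in>grpG p. chiG p d g) = 0"
proof -
  have z: "(0,0) \<in> grpG p" using p0 by (simp add: grpG_def)
  have "(\<Sum>g\<in>grpG p. chiG p d g) = (\<Sum>g\<in>grpG p. chiG p d g * cnj (chiG p (0,0) g))"
    using chiG_zero[OF p0] by (simp add: chiG_commute[of p "(0,0)"])
  also have "\<dots> = 0" using chiG_orthogonal[OF p0 d(1) z] d(2) by simp
  finally show ?thesis .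
qed

definition char_sum :: "nat \<Rightarrow> (nat \<times> nat) set \<Rightarrow> nat \<times> nat \<Rightarrow> complex" where
  "char_sum p X d = (\<Sum>y\<in>X. chiG p d y)"

lemma char_sum_inversion:
  assumes p0: "p > 0" and X: "X \<subseteq> grpG p" and x: "x \<in> grpG p"
  shows "(\<Sum>d\<in>grpG p. char_sum p X d * cnj (chiG p d x)) = (if x \<in> X then of_nat (p^3) else 0)"
proof -
  have fX: "finite X" using X finite_grpG finite_subset by blast
  have "(\<Sum>d\<in>grpG p. char_sum p X d * cnj (chiG p d x)) = (\<Sum>d\<in>grpG p. \<Sum>y\<in>X. chiG p y d * cnj (chiG p x d))"
    unfolding char_sum_def sum_distrib_right by (intro sum.cong refl) (metis chiG_commute)
  also have "\<dots> = (\<Sum>y\<in>X. \<Sum>d\<in>grpG p. chiG p y d * cnj (chiG p x d))" by (rule sum.swap)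
  also have "\<dots> = (\<Sum>y\<in>X. if y = x then of_nat (p^3) else 0)"
  proof (intro sum.cong refl)
    fix y assume "y \<in> X"
    hence yG: "y \<in> grpG p" using X by auto
    show "(\<Sum>d\<in>grpG p. chiG p y d * cnj (chiG p x d)) = (if y = x then of_nat (p^3) else 0)"
      by (rule chiG_orthogonal[OF p0 yG x])
  qed
  also have "\<dots> = (if x \<in> X then of_nat (p^3) else 0)" using fX by (simp add: sum.delta')
  finally show ?thesis .
qed

lemma eq_grpG_if_char_sum_vanishes:
  assumes p0: "p > 0" and X: "X \<subseteq> grpG p" and ne: "X \<noteq> {}"
    and z: "\<forall>d\<in>grpG p. d \<noteq> (0,0) \<longrightarrow> char_sum p X d = 0"
  shows "X = grpG p"
proof -
  have z0: "(0,0) \<in> grpG p" using p0 by (simp add: grpG_def)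
  have "(\<Sum>d\<in>grpG p. char_sum p X d * cnj (chiG p d x)) = char_sum p X (0,0)" if "x \<in> grpG p" for x
  proof -
    have "(\<Sum>d\<in>grpG p. char_sum p X d * cnj (chiG p d x)) = char_sum p X (0,0) * cnj (chiG p (0,0) x)
          + (\<Sum>d\<in>grpG p - {(0,0)}. char_sum p X d * cnj (chiG p d x))"
      using z0 finite_grpG by (simp add: sum.remove)
    also have "(\<Sum>d\<in>grpG p - {(0,0)}. char_sum p X d * cnj (chiG p d x)) = 0" using z by simp
    finally show ?thesis using chiG_zero[OF p0] by simp
  qed
  hence e: "(if x \<in> X then of_nat (p^3) else 0) = char_sum p X (0,0)" if "x \<in> grpG p" for x
    using char_sum_inversion[OF p0 X that] that by simp
  obtain x0 where x0: "x0 \<in> X" using ne by auto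
  have H: "char_sum p X (0,0) = of_nat (p^3)" using e[of x0] x0 X by auto
  have nz: "of_nat (p^3) \<noteq> (0::complex)" using p0 by (simp del: of_nat_power)
  show ?thesis
  proof
    show "grpG p \<subseteq> X"
    proof
      fix x assume x: "x \<in> grpG p"
      show "x \<in> X"
      proof (rule ccontr)
        assume "x \<notin> X"
        hence "(0::complex) = of_nat (p^3)" using e[OF x] H by simp
        thus False using nz by simp
      qed
    qed
  qed (rule X)
qed

lemma tile_iff_bij_betw:
  assumes p0: "p > 0"
  shows "tile p A \<longleftrightarrow> (\<exists>T\<subseteq>grpG p. bij_betw (\<lambda>u. gadd p (fst u) (snd u)) (A \<times> T) (grpG p))"
    (is "_ \<longleftrightarrow> (\<exists>T\<subseteq>grpG p. bij_betw ?f _ _)")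
proof
  assume "tile p A"
  then obtain T where T: "T \<subseteq> grpG p"
    and u: "\<forall>g\<in>grpG p. \<exists>!u. fst u \<in> A \<and> snd u \<in> T \<and> g = gadd p (fst u) (snd u)"
    unfolding tile_def by blast
  have "bij_betw ?f (A \<times> T) (grpG p)"
  proof (rule bij_betw_imageI)
    show "inj_on ?f (A \<times> T)"
    proof (rule inj_onI)
      fix u v assume uv: "u \<in> A \<times> T" "v \<in> A \<times> T" "?f u = ?f v"
      have "?f u \<in> grpG p" by (rule gadd_in_grpG[OF p0])
      thus "u = v" using u uv by (metis mem_Times_iff)
    qed
    show "?f ` (A \<times> T) = grpG p"
    proof
      show "?f ` (A \<times> T) \<subseteq> grpG p" using gadd_in_grpG[OF p0] by auto
      show "grpG p \<subseteq> ?f ` (A \<times> T)"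
      proof
        fix g assume "g \<in> grpG p"
        then obtain w where "fst w \<in> A" "snd w \<in> T" "g = gadd p (fst w) (snd w)" using u by blast
        thus "g \<in> ?f ` (A \<times> T)" by (auto intro!: image_eqI[of _ _ w] simp: mem_Times_iff)
      qed
    qed
  qed
  thus "\<exists>T\<subseteq>grpG p. bij_betw ?f (A \<times> T) (grpG p)" using T by blast
next
  assume "\<exists>T\<subseteq>grpG p. bij_betw ?f (A \<times> T) (grpG p)"
  then obtain T where T: "T \<subseteq> grpG p" and bij: "bij_betw ?f (A \<times> T) (grpG p)" by blast
  show "tile p A" unfolding tile_def
  proof (intro exI[of _ T] conjI T ballI)
    fix g assume "g \<in> grpG p"
    hence "g \<in> ?f ` (A \<times> T)" using bij by (simp add: bij_betw_def)
    then obtain w where w: "w \<in> A \<times> T" "g = ?f w" by blast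
    show "\<exists>!u. fst u \<in> A \<and> snd u \<in> T \<and> g = gadd p (fst u) (snd u)"
    proof (rule ex1I[of _ w])
      show "fst w \<in> A \<and> snd w \<in> T \<and> g = gadd p (fst w) (snd w)" using w by auto
      fix v assume "fst v \<in> A \<and> snd v \<in> T \<and> g = gadd p (fst v) (snd v)"
      hence "v \<in> A \<times> T" "?f v = ?f w" using w by (auto simp: mem_Times_iff)
      thus "v = w" using inj_onD[OF bij_betw_imp_inj_on[OF bij], of v w] w(1) by blast
    qed
  qed
qed

lemma tile_complementE:
  assumes p0: "p > 0" and tile: "tile p A"
  obtains T where "T \<subseteq> grpG p" "card A * card T = p^3"
    "\<forall>d\<in>grpG p. d \<noteq> (0,0) \<longrightarrow> char_sum p A d * char_sum p T d = 0"
proof -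
  from tile[unfolded tile_iff_bij_betw[OF p0]] obtain T where T: "T \<subseteq> grpG p"
    and bij0: "bij_betw (\<lambda>u. gadd p (fst u) (snd u)) (A \<times> T) (grpG p)" by blast
  define f where "f u = gadd p (fst u) (snd u)" for u
  have bij: "bij_betw f (A \<times> T) (grpG p)" using bij0 unfolding f_def .
  have "card (A \<times> T) = card (grpG p)" using bij by (rule bij_betw_same_card)
  hence c: "card A * card T = p^3" by (simp add: card_cartesian_product card_grpG)
  have "char_sum p A d * char_sum p T d = 0" if d: "d \<in> grpG p" "d \<noteq> (0,0)" for d
  proof -
    have "char_sum p A d * char_sum p T d = (\<Sum>u\<in>A \<times> T. chiG p d (f u))"
      unfolding char_sum_def f_def sum_product sum.cartesian_product chiG_gadd[OF p0] by (simp add: split_def)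
    also have "\<dots> = (\<Sum>g\<in>grpG p. chiG p d g)" using sum.reindex_bij_betw[OF bij] by simp
    also have "\<dots> = 0" by (rule sum_chiG_eq_0[OF p0 d])
    finally show ?thesis .
  qed
  thus ?thesis using that[OF T c] by blast
qed

lemma tile_card_dvd:
  assumes "p > 0" and "tile p A" and "A \<subseteq> grpG p"
  shows "card A dvd p^3"
  using tile_complementE[OF assms(1,2)] by (metis dvd_triv_left)

text \<open>If every nontrivial character sum of \<open>A\<close> were nonzero, the complement \<open>T\<close> would have all
  nontrivial character sums zero and hence be all of \<open>G\<close>.\<close>

lemma tile_char_sum_vanishes:
  assumes p0: "p > 0" and tile: "tile p A" and A: "A \<subseteq> grpG p" and not1: "card A \<noteq> 1"
  obtains d where "d \<in> grpG p" "d \<noteq> (0,0)" "char_sum p A d = 0"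
proof -
  obtain T where T: "T \<subseteq> grpG p" and cAT: "card A * card T = p^3"
    and hz: "\<forall>d\<in>grpG p. d \<noteq> (0,0) \<longrightarrow> char_sum p A d * char_sum p T d = 0"
    using tile_complementE[OF p0 tile] by blast
  show ?thesis
  proof (rule ccontr)
    assume "\<not> thesis"
    hence "\<forall>d\<in>grpG p. d \<noteq> (0,0) \<longrightarrow> char_sum p T d = 0" using hz that by auto
    moreover have "T \<noteq> {}" using cAT p0 by auto
    ultimately have "T = grpG p" using eq_grpG_if_char_sum_vanishes[OF p0 T] by blast
    hence "card A * p^3 = 1 * p^3" using cAT card_grpG by simp
    thus False using not1 p0 by simp
  qed
qed

lemma tileI:
  assumes p0: "p > 0" and A: "A \<subseteq> grpG p" and T: "T \<subseteq> grpG p"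
    and c: "card A * card T = p^3"
    and inj: "\<forall>a\<in>A. \<forall>a'\<in>A. \<forall>t\<in>T. \<forall>t'\<in>T. gadd p a t = gadd p a' t' \<longrightarrow> a = a' \<and> t = t'"
  shows "tile p A"
proof -
  define f where "f u = gadd p (fst u) (snd u)" for u
  have injf: "inj_on f (A \<times> T)"
  proof (rule inj_onI)
    fix u v assume uv: "u \<in> A \<times> T" "v \<in> A \<times> T" and "f u = f v"
    moreover have "fst u \<in> A" "fst v \<in> A" "snd u \<in> T" "snd v \<in> T" using uv by auto
    ultimately have "fst u = fst v \<and> snd u = snd v" using inj unfolding f_def by blast
    thus "u = v" by (simp add: prod_eq_iff)
  qed
  have "f ` (A \<times> T) \<subseteq> grpG p" unfolding f_def using gadd_in_grpG[OF p0] by auto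
  moreover have "card (f ` (A \<times> T)) = card (grpG p)"
    using card_image[OF injf] c by (simp add: card_cartesian_product card_grpG)
  ultimately have "f ` (A \<times> T) = grpG p" using card_subset_eq[OF finite_grpG] by blast
  hence "bij_betw f (A \<times> T) (grpG p)" using injf by (simp add: bij_betw_def)
  thus ?thesis unfolding tile_iff_bij_betw[OF p0] f_def using T by blast
qed

lemma tileI_image:
  assumes p0: "p > 0" and eX: "e ` X \<subseteq> grpG p" and inj: "inj_on e X" and T: "T \<subseteq> grpG p"
    and c: "card X * card T = p^3"
    and unique: "\<And>x x' \<tau> \<tau>'. x \<in> X \<Longrightarrow> x' \<in> X \<Longrightarrow> \<tau> \<in> T \<Longrightarrow> \<tau>' \<in> T \<Longrightarrow>
                 gadd p (e x) \<tau> = gadd p (e x') \<tau>' \<Longrightarrow> x = x'"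
  shows "tile p (e ` X)"
proof (rule tileI[OF p0 eX T])
  show "card (e ` X) * card T = p^3" using c by (simp add: card_image[OF inj])
  show "\<forall>a\<in>e ` X. \<forall>a'\<in>e ` X. \<forall>t\<in>T. \<forall>t'\<in>T. gadd p a t = gadd p a' t' \<longrightarrow> a = a' \<and> t = t'"
  proof (intro ballI impI)
    fix a a' \<tau> \<tau>' assume a: "a \<in> e ` X" "a' \<in> e ` X" and \<tau>: "\<tau> \<in> T" "\<tau>' \<in> T"
      and eq: "gadd p a \<tau> = gadd p a' \<tau>'"
    obtain x x' where xx: "x \<in> X" "x' \<in> X" "a = e x" "a' = e x'" using a by auto
    have "a = a'" using unique[OF xx(1,2) \<tau>] eq xx by simp
    moreover have "\<tau> = \<tau>'" using gadd_left_cancel[of \<tau> p \<tau>' a] \<tau> T eq \<open>a = a'\<close> by auto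
    ultimately show "a = a' \<and> \<tau> = \<tau>'" by simp
  qed
qed

lemma spectrum_card_ge:
  assumes "spectrum_of p A B"
  shows "card A \<le> card B"
proof -
  have "B \<subseteq> grpG p" using assms(1) unfolding spectrum_of_def by simp
  hence fB: "finite B" using finite_grpG by (rule finite_subset)
  show ?thesis
    using card_le_card_if_spanning[OF fB, of A "chiG p"] assms(1) unfolding spectrum_of_def by blast
qed

lemma spectral_setE:
  assumes "spectral_set p A"
  obtains B where "B \<subseteq> grpG p" "finite B" "card A \<le> card B"
    "\<And>b b'. b \<in> B \<Longrightarrow> b' \<in> B \<Longrightarrow> b \<noteq> b' \<Longrightarrow> innerA A (chiG p b) (chiG p b') = 0"
proof -
  obtain B where B: "spectrum_of p A B" using assms unfolding spectral_set_def by blast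
  have "B \<subseteq> grpG p" using B unfolding spectrum_of_def by simp
  moreover have "finite B" using calculation finite_grpG finite_subset by blast
  ultimately show ?thesis
    using that spectrum_card_ge[OF B] B unfolding spectrum_of_def by blast
qed

lemma spectral_setI:
  assumes p0: "p > 0" and fI: "finite I" and I: "I \<noteq> {}" and b: "\<forall>i\<in>I. b i \<in> grpG p"
    and fA: "finite A" and A: "A \<noteq> {}"
    and orth: "\<forall>i\<in>I. \<forall>j\<in>I. i \<noteq> j \<longrightarrow> (\<Sum>a\<in>A. chiG p (b i) a * cnj (chiG p (b j) a)) = 0"
    and dual: "\<forall>a\<in>A. \<forall>a'\<in>A. a \<noteq> a' \<longrightarrow> (\<Sum>i\<in>I. chiG p (b i) a * cnj (chiG p (b i) a')) = 0"
  shows "spectral_set p A"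
proof -
  have one: "chiG p d a * cnj (chiG p d a) = 1" for d a unfolding chiG_zeta[OF p0] by simp
  have injb: "inj_on b I"
  proof (rule inj_onI)
    fix i j assume ij: "i \<in> I" "j \<in> I" "b i = b j"
    show "i = j"
    proof (rule ccontr)
      assume "i \<noteq> j"
      hence "(\<Sum>a\<in>A. chiG p (b i) a * cnj (chiG p (b j) a)) = 0" using orth ij by blast
      moreover have "(\<Sum>a\<in>A. chiG p (b i) a * cnj (chiG p (b j) a)) = of_nat (card A)"
        using ij(3) one by simp
      ultimately show False using fA A by simp
    qed
  qed
  define N where "N = card I"
  have N0: "N > 0" unfolding N_def using fI I by (simp add: card_gt_0_iff)
  show ?thesis unfolding spectral_set_def spectrum_of_def
  proof (intro exI[of _ "b ` I"] conjI)
    show "b ` I \<subseteq> grpG p" using b by auto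
    show "\<forall>x\<in>b ` I. \<exists>a\<in>A. chiG p x a \<noteq> 0" using A by (auto simp: chiG_zeta[OF p0])
    show "\<forall>x\<in>b ` I. \<forall>y\<in>b ` I. x \<noteq> y \<longrightarrow> innerA A (chiG p x) (chiG p y) = 0"
      unfolding innerA_def using orth by auto
    show "\<forall>f. \<exists>c. \<forall>a\<in>A. f a = (\<Sum>x\<in>b ` I. c x * chiG p x a)"
    proof
      fix f :: "nat \<times> nat \<Rightarrow> complex"
      define c where "c x = (\<Sum>a'\<in>A. f a' * cnj (chiG p x a')) / of_nat N" for x
      show "\<exists>c. \<forall>a\<in>A. f a = (\<Sum>x\<in>b ` I. c x * chiG p x a)"
      proof (intro exI[of _ c] ballI)
        fix a assume a: "a \<in> A"
        have "(\<Sum>x\<in>b ` I. c x * chiG p x a) = (\<Sum>i\<in>I. c (b i) * chiG p (b i) a)"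
          by (rule sum.reindex[OF injb, unfolded comp_def])
        also have "\<dots> = (\<Sum>a'\<in>A. f a' * (\<Sum>i\<in>I. chiG p (b i) a * cnj (chiG p (b i) a'))) / of_nat N"
          unfolding c_def by (simp add: sum_divide_distrib sum_distrib_left sum_distrib_right algebra_simps)
            (subst sum.swap, simp)
        also have "(\<Sum>a'\<in>A. f a' * (\<Sum>i\<in>I. chiG p (b i) a * cnj (chiG p (b i) a'))) =
                   (\<Sum>a'\<in>A. if a' = a then f a * of_nat N else 0)"
        proof (intro sum.cong refl)
          fix a' assume a': "a' \<in> A"
          show "f a' * (\<Sum>i\<in>I. chiG p (b i) a * cnj (chiG p (b i) a')) = (if a' = a then f a * of_nat N else 0)"
          proof (cases "a' = a")
            case True thus ?thesis using one by (simp add: N_def)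
          next
            case False thus ?thesis using dual a a' by auto
          qed
        qed
        also have "\<dots> = f a * of_nat N" using fA a by (simp add: sum.delta')
        finally show "f a = (\<Sum>x\<in>b ` I. c x * chiG p x a)" using N0 by simp
      qed
    qed
  qed
qed

lemma spectral_setI_image:
  assumes p0: "p > 0" and fX: "finite X" and ne: "X \<noteq> {}" and inj: "inj_on e X"
    and fI: "finite I" and I: "I \<noteq> {}" and b: "\<forall>i\<in>I. b i \<in> grpG p"
    and orth: "\<And>i j. i \<in> I \<Longrightarrow> j \<in> I \<Longrightarrow> i \<noteq> j \<Longrightarrow> (\<Sum>x\<in>X. chiG p (b i) (e x) * cnj (chiG p (b j) (e x))) = 0"
    and dual: "\<And>x x'. x \<in> X \<Longrightarrow> x' \<in> X \<Longrightarrow> x \<noteq> x' \<Longrightarrow> (\<Sum>i\<in>I. chiG p (b i) (e x) * cnj (chiG p (b i) (e x'))) = 0"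
  shows "spectral_set p (e ` X)"
proof (rule spectral_setI[OF p0 fI I b])
  show "finite (e ` X)" "e ` X \<noteq> {}" using fX ne by simp_all
  show "\<forall>i\<in>I. \<forall>j\<in>I. i \<noteq> j \<longrightarrow> (\<Sum>a\<in>e ` X. chiG p (b i) a * cnj (chiG p (b j) a)) = 0"
    using orth by (simp add: sum.reindex[OF inj])
  show "\<forall>a\<in>e ` X. \<forall>a'\<in>e ` X. a \<noteq> a' \<longrightarrow> (\<Sum>i\<in>I. chiG p (b i) a * cnj (chiG p (b i) a')) = 0"
    using dual by auto
qed

lemma singleton_tile_spectral:
  assumes p0: "p > 0" and A: "A \<subseteq> grpG p" and c: "card A = 1"
  shows "tile p A" and "spectral_set p A"
proof -
  obtain a where a: "A = {a}" using c by (rule card_1_singletonE)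
  show "tile p A"
  proof (rule tileI[OF p0 A order_refl])
    show "card A * card (grpG p) = p^3" using c card_grpG by simp
    show "\<forall>x\<in>A. \<forall>x'\<in>A. \<forall>t\<in>grpG p. \<forall>t'\<in>grpG p. gadd p x t = gadd p x' t' \<longrightarrow> x = x' \<and> t = t'"
      using a gadd_left_cancel by auto
  qed
  show "spectral_set p A"
  proof (rule spectral_setI[of p "{0::nat}" "\<lambda>_. (0,0)"])
    show "\<forall>i\<in>{0::nat}. (0::nat, 0::nat) \<in> grpG p" using p0 by (simp add: grpG_def)
  qed (use p0 a in auto)
qed

section \<open>The maximal subgroups\<close>

definition max_subgroup_noncyclic :: "nat \<Rightarrow> (nat \<times> nat) set" where
  "max_subgroup_noncyclic p = {a \<in> grpG p. p dvd fst a}"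

definition max_subgroup_cyclic :: "nat \<Rightarrow> nat \<Rightarrow> (nat \<times> nat) set" where
  "max_subgroup_cyclic p l = {a \<in> grpG p. snd a = (l * fst a) mod p}"

lemma subgroup_nat_mult:
  assumes "is_subgroupG p H" and "x \<in> H"
  shows "((k * fst x) mod p^2, (k * snd x) mod p) \<in> H"
proof (induction k)
  case 0 thus ?case using assms(1) unfolding is_subgroupG_def by simp
next
  case (Suc k)
  have "gadd p ((k * fst x) mod p^2, (k * snd x) mod p) x \<in> H"
    using assms Suc unfolding is_subgroupG_def by blast
  moreover have "gadd p ((k * fst x) mod p^2, (k * snd x) mod p) x = ((Suc k * fst x) mod p^2, (Suc k * snd x) mod p)"
    unfolding gadd_def by (simp add: mod_add_left_eq mod_add_right_eq add.commute)
  ultimately show ?case by simp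
qed

text \<open>Solve \<open>\<alpha> h + \<beta> g = y\<close>: first \<open>\<beta>\<close> mod \<open>p\<close> by Cramer's rule, then \<open>\<alpha>\<close> mod \<open>p\<^sup>2\<close> from the
  first coordinate, where \<open>fst h\<close> is a unit.\<close>

lemma grpG_subset_subgroup_if_det_not_dvd:
  assumes p: "prime p" and H: "is_subgroupG p H" and h: "h \<in> H" and g: "g \<in> H"
    and h1: "\<not> p dvd fst h"
    and det: "\<not> int p dvd int (fst h) * int (snd g) - int (snd h) * int (fst g)"
  shows "grpG p \<subseteq> H"
proof
  fix y assume y: "y \<in> grpG p"
  have p0: "p > 0" using p prime_gt_0_nat by blast
  define d where "d = int (fst h) * int (snd g) - int (snd h) * int (fst g)"
  define c where "c = int (fst h) * int (snd y) - int (snd h) * int (fst y)"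
  have "coprime (int (fst h)) (int p)" using h1 p by (metis coprime_commute int_dvd_int_iff prime_imp_coprime prime_nat_int_transfer)
  hence "coprime (int (fst h)) (int (p^2))" by simp
  then obtain hi where hi: "[int (fst h) * hi = 1] (mod int (p^2))" using cong_solve_coprime_int by blast
  have "coprime d (int p)" using det p unfolding d_def by (metis coprime_commute prime_imp_coprime prime_nat_int_transfer)
  then obtain di where di: "[d * di = 1] (mod int p)" using cong_solve_coprime_int by blast
  define \<beta> where "\<beta> = nat ((c * di) mod int p)"
  define \<alpha> where "\<alpha> = nat (((int (fst y) - int \<beta> * int (fst g)) * hi) mod int (p^2))"
  have E1: "int (p^2) dvd int \<alpha> * int (fst h) + int \<beta> * int (fst g) - int (fst y)"
  proof -
    have a: "int (p^2) dvd int \<alpha> - (int (fst y) - int \<beta> * int (fst g)) * hi"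
      unfolding \<alpha>_def using dvd_nat_mod_diff[of "p^2"] p0 by simp
    have b: "int (p^2) dvd int (fst h) * hi - 1" using hi by (simp add: cong_iff_dvd_diff)
    have "int \<alpha> * int (fst h) + int \<beta> * int (fst g) - int (fst y) =
          (int \<alpha> - (int (fst y) - int \<beta> * int (fst g)) * hi) * int (fst h)
          + (int (fst h) * hi - 1) * (int (fst y) - int \<beta> * int (fst g))"
      by (simp add: algebra_simps)
    thus ?thesis using a b by (simp add: dvd_add dvd_mult2)
  qed
  have Cramer: "int p dvd int \<beta> * d - c"
  proof -
    have a: "int p dvd int \<beta> - c * di" unfolding \<beta>_def using dvd_nat_mod_diff[OF p0] by simp
    have b: "int p dvd d * di - 1" using di by (simp add: cong_iff_dvd_diff)
    have "int \<beta> * d - c = (int \<beta> - c * di) * d + (d * di - 1) * c" by (simp add: algebra_simps)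
    thus ?thesis using a b by (simp add: dvd_add dvd_mult2)
  qed
  have E2: "int p dvd int \<alpha> * int (snd h) + int \<beta> * int (snd g) - int (snd y)"
  proof -
    have "int p dvd int (p^2)" by simp
    hence "int p dvd int (snd h) * (int \<alpha> * int (fst h) + int \<beta> * int (fst g) - int (fst y))
                     + (int \<beta> * d - c)"
      using E1 Cramer by (intro dvd_add dvd_mult) (auto intro: dvd_trans)
    also have "int (snd h) * (int \<alpha> * int (fst h) + int \<beta> * int (fst g) - int (fst y)) + (int \<beta> * d - c)
             = int (fst h) * (int \<alpha> * int (snd h) + int \<beta> * int (snd g) - int (snd y))"
      unfolding c_def d_def by (simp add: algebra_simps)
    finally show ?thesis using h1 p by (simp add: prime_dvd_mult_iff prime_nat_int_transfer)
  qed
  have "gadd p ((\<alpha> * fst h) mod p^2, (\<alpha> * snd h) mod p) ((\<beta> * fst g) mod p^2, (\<beta> * snd g) mod p) \<in> H"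
    using H subgroup_nat_mult[OF H h] subgroup_nat_mult[OF H g] unfolding is_subgroupG_def by blast
  moreover have "gadd p ((\<alpha> * fst h) mod p^2, (\<alpha> * snd h) mod p) ((\<beta> * fst g) mod p^2, (\<beta> * snd g) mod p) = y"
  proof -
    have "(\<alpha> * fst h + \<beta> * fst g) mod p^2 = fst y"
      using dvd_nat_mod_diff_nat[OF E1[folded of_nat_mult of_nat_add]] y p0
      by (intro nat_eq_if_dvd_diff[of "p^2"]) (auto simp: grpG_def)
    moreover have "(\<alpha> * snd h + \<beta> * snd g) mod p = snd y"
      using dvd_nat_mod_diff_nat[OF E2[folded of_nat_mult of_nat_add]] y p0
      by (intro nat_eq_if_dvd_diff[of p]) (auto simp: grpG_def)
    ultimately show ?thesis unfolding gadd_def by (simp add: mod_add_eq prod_eq_iff)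
  qed
  ultimately show "y \<in> H" by simp
qed

lemma proper_subgroup_subset_maximal:
  assumes p: "prime p" and H: "is_subgroupG p H" and HG: "H \<noteq> grpG p"
  shows "H \<subseteq> max_subgroup_noncyclic p \<or> (\<exists>l<p. H \<subseteq> max_subgroup_cyclic p l)"
proof (rule ccontr)
  assume nc: "\<not> ?thesis"
  have p0: "p > 0" using p prime_gt_0_nat by blast
  have HsG: "H \<subseteq> grpG p" using H unfolding is_subgroupG_def by simp
  obtain h where h: "h \<in> H" "\<not> p dvd fst h" using nc HsG unfolding max_subgroup_noncyclic_def by auto
  have "coprime (int (fst h)) (int p)"
    using h(2) p by (metis coprime_commute int_dvd_int_iff prime_imp_coprime prime_nat_int_transfer)
  then obtain i1 where i1: "[int (fst h) * i1 = 1] (mod int p)" using cong_solve_coprime_int by blast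
  define l where "l = nat ((int (snd h) * i1) mod int p)"
  have "l < p" unfolding l_def using p0 by (simp add: nat_less_iff)
  then obtain g where g: "g \<in> H" "g \<notin> max_subgroup_cyclic p l" using nc by blast
  have gG: "g \<in> grpG p" using g HsG by auto
  have hl: "int p dvd int (snd h) - int l * int (fst h)"
  proof -
    have a: "int p dvd int l - int (snd h) * i1" unfolding l_def using dvd_nat_mod_diff[OF p0] by blast
    have b: "int p dvd int (fst h) * i1 - 1" using i1 by (simp add: cong_iff_dvd_diff)
    have "int (snd h) - int l * int (fst h) = (int l - int (snd h) * i1) * (- int (fst h)) + (int (fst h) * i1 - 1) * (- int (snd h))"
      by (simp add: algebra_simps)
    thus ?thesis using a b by (simp add: dvd_add dvd_mult2)
  qed
  have gl: "\<not> int p dvd int (snd g) - int l * int (fst g)"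
  proof
    assume "int p dvd int (snd g) - int l * int (fst g)"
    hence "int p dvd int (snd g) - int ((l * fst g) mod p)"
      by (metis dvd_nat_mod_diff_nat dvd_minus_iff minus_diff_eq of_nat_mult)
    hence "snd g = (l * fst g) mod p" using gG p0 by (intro nat_eq_if_dvd_diff) (auto simp: grpG_def)
    thus False using g gG unfolding max_subgroup_cyclic_def by simp
  qed
  have "int (fst h) * int (snd g) - int (snd h) * int (fst g)
        = int (fst h) * (int (snd g) - int l * int (fst g)) - int (fst g) * (int (snd h) - int l * int (fst h))"
    by (simp add: algebra_simps)
  moreover have "\<not> int p dvd int (fst h) * (int (snd g) - int l * int (fst g))"
    using gl h(2) p by (simp add: prime_dvd_mult_iff prime_nat_int_transfer)
  moreover have "int p dvd int (fst g) * (int (snd h) - int l * int (fst h))" using hl by simp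
  ultimately have "\<not> int p dvd int (fst h) * int (snd g) - int (snd h) * int (fst g)"
    by (metis diff_add_cancel dvd_add)
  hence "grpG p \<subseteq> H" using grpG_subset_subgroup_if_det_not_dvd[OF p H h(1) g(1) h(2)] by blast
  thus False using HsG HG by auto
qed

section \<open>Subsets of a cyclic maximal subgroup\<close>

text \<open>\<open>cyc_emb p l\<close> parametrises the subgroup generated by \<open>(1, l)\<close> by \<open>\<int>/p\<^sup>2\<close>; on it the
  character \<open>\<chi>_d\<close> is \<open>t \<mapsto> \<zeta>^(t * cyc_freq p l d)\<close>.\<close>

definition cyc_emb :: "nat \<Rightarrow> nat \<Rightarrow> nat \<Rightarrow> nat \<times> nat" where
  "cyc_emb p l t = (t, (l * t) mod p)"

definition cyc_freq :: "nat \<Rightarrow> nat \<Rightarrow> nat \<times> nat \<Rightarrow> int" where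
  "cyc_freq p l d = int (fst d) + int p * int l * int (snd d)"

lemma inj_cyc_emb: "inj_on (cyc_emb p l) X"
  unfolding cyc_emb_def inj_on_def by simp

lemma cyc_emb_in_grpG: "p > 0 \<Longrightarrow> t < p*p \<Longrightarrow> cyc_emb p l t \<in> grpG p"
  unfolding cyc_emb_def grpG_def by (simp add: power2_eq_square)

lemma chiG_cyc_emb:
  assumes p0: "p > 0"
  shows "chiG p d (cyc_emb p l t) = zeta p (int t * cyc_freq p l d)"
proof -
  have "chiG p d (cyc_emb p l t) = zeta p (int (t * fst d) + int p * int (((l * t) mod p) * snd d))"
    unfolding chiG_zeta[OF p0] cyc_emb_def by simp
  also have "\<dots> = zeta p (int (t * fst d) + int p * (int (l * t) * int (snd d)))"
  proof (rule zeta_cong[OF p0])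
    have "(int p * ((int (l*t) mod int p) * int (snd d))) mod int (p*p) = (int p * (int (l*t) * int (snd d))) mod int (p*p)"
      by (rule mult_mod_sq_cong)
    hence "(int p * int (((l * t) mod p) * snd d)) mod int (p*p) = (int p * (int (l*t) * int (snd d))) mod int (p*p)"
      by (simp add: of_nat_mod)
    thus "(int (t * fst d) + int p * int (((l * t) mod p) * snd d)) mod int (p*p) =
          (int (t * fst d) + int p * (int (l * t) * int (snd d))) mod int (p*p)"
      by (rule mod_add_cong[OF refl])
  qed
  also have "int (t * fst d) + int p * (int (l * t) * int (snd d)) = int t * cyc_freq p l d"
    unfolding cyc_freq_def by (simp add: algebra_simps)
  finally show ?thesis .
qed

lemma char_sum_cyc_emb:
  assumes p0: "p > 0"
  shows "char_sum p (cyc_emb p l ` X) d = (\<Sum>t\<in>X. zeta p (int t * cyc_freq p l d))"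
  unfolding char_sum_def by (simp add: sum.reindex[OF inj_cyc_emb] chiG_cyc_emb[OF p0])

lemma innerA_cyc_emb:
  assumes p0: "p > 0"
  shows "innerA (cyc_emb p l ` X) (chiG p b) (chiG p b') = (\<Sum>t\<in>X. zeta p (int t * (cyc_freq p l b - cyc_freq p l b')))"
proof -
  have "innerA (cyc_emb p l ` X) (chiG p b) (chiG p b') = (\<Sum>t\<in>X. chiG p b (cyc_emb p l t) * cnj (chiG p b' (cyc_emb p l t)))"
    unfolding innerA_def by (simp add: sum.reindex[OF inj_cyc_emb])
  also have "\<dots> = (\<Sum>t\<in>X. zeta p (int t * (cyc_freq p l b - cyc_freq p l b')))"
    unfolding chiG_cyc_emb[OF p0] zeta_diff[symmetric] by (simp add: algebra_simps)
  finally show ?thesis .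
qed

text \<open>The four shapes of a tile (equivalently, spectral set) in \<open>\<int>/p\<^sup>2\<close>: a point, the whole group,
  a coset of \<open>p(\<int>/p\<^sup>2)\<close>, and a complete set of residues mod \<open>p\<close>.\<close>

definition cyclic_shape :: "nat \<Rightarrow> nat set \<Rightarrow> bool" where
  "cyclic_shape p X \<longleftrightarrow> card X = 1 \<or> X = {..<p*p} \<or> (card X = p \<and> periodic_mod_sq p X)
      \<or> (card X = p \<and> inj_on (\<lambda>t. t mod p) X)"

lemma periodic_mod_sq_residue_class:
  assumes per: "periodic_mod_sq p X" and t: "t \<in> X" and tlt: "t < p*p"
    and y: "y < p*p" and ym: "y mod p = t mod p"
  shows "y \<in> X"
proof -
  have kk: "(t + k*p) mod (p*p) \<in> X" for k
  proof (induction k)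
    case 0 thus ?case using t tlt by simp
  next
    case (Suc k)
    have "((t + k*p) mod (p*p) + p) mod (p*p) \<in> X" using per Suc unfolding periodic_mod_sq_def by blast
    moreover have "((t + k*p) mod (p*p) + p) mod (p*p) = (t + Suc k * p) mod (p*p)"
    proof -
      have "((t + k*p) mod (p*p) + p) mod (p*p) = (t + k*p + p) mod (p*p)" by (rule mod_add_left_eq)
      also have "t + k*p + p = t + Suc k * p" by simp
      finally show ?thesis .
    qed
    ultimately show ?case by simp
  qed
  have e: "(y + p*p) mod p = t mod p" using ym by simp
  have le: "t \<le> y + p*p" using tlt by simp
  have "p dvd (y + p*p - t)" using mod_eq_dvd_iff_nat[OF le, of p] e by simp
  then obtain k where k: "y + p*p - t = p * k" by (auto elim!: dvdE)
  hence "t + k*p = y + p*p" using tlt by (simp add: algebra_simps)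
  hence "(t + k*p) mod (p*p) = y" using y by simp
  thus ?thesis using kk by metis
qed

lemma periodic_equidistributed_eq_lessThan:
  assumes p0: "p > 0" and X: "X \<subseteq> {..<p*p}" and ne: "X \<noteq> {}" and per: "periodic_mod_sq p X" and eqc: "equidistributed_mod p X"
  shows "X = {..<p*p}"
proof
  show "X \<subseteq> {..<p*p}" by (rule X)
  show "{..<p*p} \<subseteq> X"
  proof
    fix y assume "y \<in> {..<p*p}"
    hence y: "y < p*p" by simp
    obtain t0 where t0: "t0 \<in> X" using ne by auto
    have fin: "finite X" using X finite_subset by blast
    have "card {t\<in>X. t mod p = t0 mod p} > 0" using t0 fin by (auto simp: card_gt_0_iff)
    moreover have "card {t\<in>X. t mod p = y mod p} = card {t\<in>X. t mod p = t0 mod p}"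
    proof -
      have a: "card {t\<in>X. t mod p = y mod p} = card {t\<in>X. t mod p = 0}"
        using eqc[unfolded equidistributed_mod_def, rule_format, of "y mod p"] mod_less_divisor[OF p0, of y] by blast
      have b: "card {t\<in>X. t mod p = t0 mod p} = card {t\<in>X. t mod p = 0}"
        using eqc[unfolded equidistributed_mod_def, rule_format, of "t0 mod p"] mod_less_divisor[OF p0, of t0] by blast
      show ?thesis using a b by linarith
    qed
    ultimately have "card {t\<in>X. t mod p = y mod p} > 0" by simp
    hence "{t\<in>X. t mod p = y mod p} \<noteq> {}" by (metis card.empty less_irrefl)
    then obtain t where t: "t \<in> X" "t mod p = y mod p" by auto
    show "y \<in> X" using periodic_mod_sq_residue_class[OF per t(1) _ y] t X by auto
  qed
qed

lemma periodic_mod_sq_card_p: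
  assumes p0: "p > 0" and X: "X \<subseteq> {..<p*p}" and c: "card X = p" and per: "periodic_mod_sq p X"
  obtains r where "r < p" "X = (\<lambda>k. r + k*p) ` {..<p}"
proof -
  have fin: "finite X" using X finite_subset by blast
  have "X \<noteq> {}" using c p0 by auto
  then obtain t0 where t0: "t0 \<in> X" by auto
  define r where "r = t0 mod p"
  have r: "r < p" unfolding r_def using p0 by simp
  have lt: "r + k*p < p*p" if "k < p" for k using mult_add_less_sq[OF r that] by (simp add: add.commute)
  have sub: "(\<lambda>k. r + k*p) ` {..<p} \<subseteq> X"
  proof
    fix y assume "y \<in> (\<lambda>k. r + k*p) ` {..<p}"
    then obtain k where k: "k < p" "y = r + k*p" by auto
    have "y mod p = t0 mod p" using k r unfolding r_def by simp
    thus "y \<in> X" using periodic_mod_sq_residue_class[OF per t0 _ _] k lt t0 X by auto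
  qed
  have "inj_on (\<lambda>k. r + k*p) {..<p}"
  proof (rule inj_onI)
    fix k k' assume "r + k*p = r + k'*p"
    hence "k*p = k'*p" by simp
    thus "k = k'" using p0 by simp
  qed
  hence "card ((\<lambda>k. r + k*p) ` {..<p}) = p" by (simp add: card_image)
  hence "card ((\<lambda>k. r + k*p) ` {..<p}) = card X" using c by simp
  hence "(\<lambda>k. r + k*p) ` {..<p} = X" using card_subset_eq[OF fin sub] by blast
  thus ?thesis using that r by blast
qed

lemma cyclic_shape_if_tile:
  assumes p: "prime p" and X: "X \<subseteq> {..<p*p}" and tile: "tile p (cyc_emb p l ` X)"
  shows "cyclic_shape p X"
proof -
  have p0: "p > 0" using p prime_gt_0_nat by blast
  have fin: "finite X" using X finite_subset by blast
  have AG: "cyc_emb p l ` X \<subseteq> grpG p" using X cyc_emb_in_grpG[OF p0] by auto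
  have cA: "card (cyc_emb p l ` X) = card X" by (rule card_image[OF inj_cyc_emb])
  have "card X dvd p^3" using tile_card_dvd[OF p0 tile AG] cA by simp
  moreover have "card X \<le> p*p" using card_mono[OF _ X] by simp
  ultimately have "card X = 1 \<or> card X = p \<or> card X = p*p" by (rule dvd_cube_le_sq_cases[OF p])
  then consider "card X = 1" | "card X = p" | "card X = p*p" by argo
  thus ?thesis
  proof cases
    case 2
    have "card (cyc_emb p l ` X) \<noteq> 1" using cA 2 prime_gt_1_nat[OF p] by simp
    then obtain d where "d \<in> grpG p" "d \<noteq> (0,0)" "char_sum p (cyc_emb p l ` X) d = 0"
      by (rule tile_char_sum_vanishes[OF p0 tile AG])
    hence vanish: "(\<Sum>t\<in>X. zeta p (int t * cyc_freq p l d)) = 0" by (simp add: char_sum_cyc_emb[OF p0])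
    show ?thesis
    proof (cases "int p dvd cyc_freq p l d")
      case False
      thus ?thesis using cyclic_vanishing_sum_periodic[OF p X vanish] 2 unfolding cyclic_shape_def by simp
    next
      case True
      hence "equidistributed_mod p X" by (rule cyclic_vanishing_sum_equidistributed[OF p X vanish])
      moreover have "\<forall>t\<in>X. t mod p < p" using p0 by simp
      ultimately have "inj_on (\<lambda>t. t mod p) X"
        using inj_on_if_equal_fibers[where f="\<lambda>t. t mod p", OF fin 2 _ _ p0]
        unfolding equidistributed_mod_def by blast
      thus ?thesis using 2 unfolding cyclic_shape_def by simp
    qed
  next
    case 3
    hence "card X = card {..<p*p}" by simp
    hence "X = {..<p*p}" using card_subset_eq[OF finite_lessThan X] by blast
    thus ?thesis unfolding cyclic_shape_def by simp
  qed (simp add: cyclic_shape_def)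
qed

lemma cyclic_shape_if_spectral:
  assumes p: "prime p" and X: "X \<subseteq> {..<p*p}" and ne: "X \<noteq> {}"
    and spec: "spectral_set p (cyc_emb p l ` X)"
  shows "cyclic_shape p X"
proof (cases "card X = 1")
  case False
  have p0: "p > 0" using p prime_gt_0_nat by blast
  have fin: "finite X" using X finite_subset by blast
  have cA: "card (cyc_emb p l ` X) = card X" by (rule card_image[OF inj_cyc_emb])
  obtain B where fB: "finite B" and cB: "card X \<le> card B"
    and orth: "\<And>b b'. b \<in> B \<Longrightarrow> b' \<in> B \<Longrightarrow> b \<noteq> b' \<Longrightarrow> innerA (cyc_emb p l ` X) (chiG p b) (chiG p b') = 0"
    using spectral_setE[OF spec] cA by metis
  define F where "F b = cyc_freq p l b" for b
  have vanish: "(\<Sum>t\<in>X. zeta p (int t * (F b - F b'))) = 0" if "b \<in> B" "b' \<in> B" "b \<noteq> b'" for b b'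
    using orth[OF that] unfolding innerA_cyc_emb[OF p0] F_def .
  have cpos: "card X > 0" using fin ne by (simp add: card_gt_0_iff)
  hence "card B \<ge> 2" using cB False by simp
  then obtain b0 b0' where b0: "b0 \<in> B" "b0' \<in> B" "b0 \<noteq> b0'" using two_elemsE[OF fB] by blast
  have card_p: "card X = p" if "card B \<le> p"
    using cyclic_vanishing_sum_card_dvd[OF p X vanish[OF b0]] cB cpos that dvd_le_imp_eq by auto
  have periodic: "periodic_mod_sq p X" if "b \<in> B" "b' \<in> B" "b \<noteq> b'" "\<not> int p dvd F b - F b'" for b b'
    using cyclic_vanishing_sum_periodic[OF p X vanish[OF that(1-3)] that(4)] .
  have equi: "equidistributed_mod p X" if "b \<in> B" "b' \<in> B" "b \<noteq> b'" "int p dvd F b - F b'" for b b'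
    using cyclic_vanishing_sum_equidistributed[OF p X vanish[OF that(1-3)] that(4)] .
  consider (mixed) b1 b1' b2 b2' where "b1 \<in> B" "b1' \<in> B" "b1 \<noteq> b1'" "\<not> int p dvd F b1 - F b1'"
      "b2 \<in> B" "b2' \<in> B" "b2 \<noteq> b2'" "int p dvd F b2 - F b2'"
    | (coprime) "\<And>b b'. b \<in> B \<Longrightarrow> b' \<in> B \<Longrightarrow> b \<noteq> b' \<Longrightarrow> \<not> int p dvd F b - F b'"
    | (dvd) "\<And>b b'. b \<in> B \<Longrightarrow> b' \<in> B \<Longrightarrow> b \<noteq> b' \<Longrightarrow> int p dvd F b - F b'"
    by blast
  thus ?thesis
  proof cases
    case mixed
    hence "X = {..<p*p}"
      using periodic_equidistributed_eq_lessThan[OF p0 X ne] periodic equi by blast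
    thus ?thesis unfolding cyclic_shape_def by simp
  next
    case coprime
    hence "card X = p" using card_p card_le_if_diffs_not_dvd[OF p0] by blast
    thus ?thesis using periodic[OF b0 coprime[OF b0]] unfolding cyclic_shape_def by simp
  next
    case dvd
    have "\<not> int (p*p) dvd F b - F b'" if "b \<in> B" "b' \<in> B" "b \<noteq> b'" for b b'
      using cyclic_vanishing_sum_not_dvd[OF p0 fin ne vanish[OF that]] .
    moreover have "int p dvd F b - F b'" if "b \<in> B" "b' \<in> B" for b b'
      using dvd[OF that] by (cases "b = b'") auto
    ultimately have "card X = p" using card_p card_le_if_diffs_dvd_not_dvd_sq[OF p0] by blast
    moreover have "equidistributed_mod p X" using equi[OF b0 dvd[OF b0]] .
    moreover have "\<forall>t\<in>X. t mod p < p" using p0 by simp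
    ultimately have "inj_on (\<lambda>t. t mod p) X"
      using inj_on_if_equal_fibers[where f="\<lambda>t. t mod p", OF fin _ _ _ p0]
      unfolding equidistributed_mod_def by blast
    thus ?thesis using \<open>card X = p\<close> unfolding cyclic_shape_def by simp
  qed
qed (simp add: cyclic_shape_def)

lemma spectral_setI_cyc_emb:
  assumes p0: "p > 0" and X: "X \<subseteq> {..<p*p}" and ne: "X \<noteq> {}"
    and fI: "finite I" and I: "I \<noteq> {}" and b: "\<forall>i\<in>I. b i \<in> grpG p"
    and orth: "\<And>i j. i \<in> I \<Longrightarrow> j \<in> I \<Longrightarrow> i \<noteq> j \<Longrightarrow> (\<Sum>t\<in>X. zeta p (int t * (cyc_freq p l (b i) - cyc_freq p l (b j)))) = 0"
    and dual: "\<And>t t'. t \<in> X \<Longrightarrow> t' \<in> X \<Longrightarrow> t \<noteq> t' \<Longrightarrow> (\<Sum>i\<in>I. zeta p ((int t - int t') * cyc_freq p l (b i))) = 0"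
  shows "spectral_set p (cyc_emb p l ` X)"
proof (rule spectral_setI_image[OF p0 _ ne inj_cyc_emb fI I b])
  have prod: "chiG p d (cyc_emb p l t) * cnj (chiG p d' (cyc_emb p l t')) =
      zeta p (int t * cyc_freq p l d - int t' * cyc_freq p l d')" for d d' t t'
    unfolding chiG_cyc_emb[OF p0] zeta_diff ..
  show "finite X" using X finite_subset by blast
  show "(\<Sum>t\<in>X. chiG p (b i) (cyc_emb p l t) * cnj (chiG p (b j) (cyc_emb p l t))) = 0"
    if "i \<in> I" "j \<in> I" "i \<noteq> j" for i j
    using orth[OF that] unfolding prod by (simp add: algebra_simps)
  show "(\<Sum>i\<in>I. chiG p (b i) (cyc_emb p l t) * cnj (chiG p (b i) (cyc_emb p l t'))) = 0"
    if "t \<in> X" "t' \<in> X" "t \<noteq> t'" for t t'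
    using dual[OF that] unfolding prod by (simp add: algebra_simps)
qed

lemma tile_spectral_cyc_emb_full:
  assumes p0: "p > 0"
  shows "tile p (cyc_emb p l ` {..<p*p})" and "spectral_set p (cyc_emb p l ` {..<p*p})"
proof -
  have X: "cyc_emb p l ` {..<p*p} \<subseteq> grpG p" using cyc_emb_in_grpG[OF p0] by auto
  have diff: "(\<Sum>k<p*p. zeta p (int k * (int i - int j))) = 0" if "i < p*p" "j < p*p" "i \<noteq> j" for i j
  proof (rule zeta_period_sum[OF p0])
    show "int i - int j \<noteq> 0" using that by simp
    have "int i < int (p*p)" "int j < int (p*p)" using that by (simp_all only: of_nat_less_iff)
    thus "\<bar>int i - int j\<bar> < int (p*p)" by linarith
  qed
  show "tile p (cyc_emb p l ` {..<p*p})"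
  proof (rule tileI_image[OF p0 X inj_cyc_emb, of "(\<lambda>j. (0,j)) ` {..<p}"])
    show "(\<lambda>j. (0::nat, j)) ` {..<p} \<subseteq> grpG p" using p0 by (auto simp: grpG_def)
    have "card ((\<lambda>j. (0::nat, j)) ` {..<p}) = p" by (simp add: card_image inj_on_def)
    thus "card {..<p*p} * card ((\<lambda>j. (0::nat, j)) ` {..<p}) = p^3" by (simp add: power3_eq_cube)
    fix t t' \<tau> \<tau>' assume t: "t \<in> {..<p*p}" "t' \<in> {..<p*p}" and \<tau>: "\<tau> \<in> (\<lambda>j. (0::nat, j)) ` {..<p}" "\<tau>' \<in> (\<lambda>j. (0::nat, j)) ` {..<p}"
      and e: "gadd p (cyc_emb p l t) \<tau> = gadd p (cyc_emb p l t') \<tau>'"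
    have "t mod p^2 = t' mod p^2" using e \<tau> unfolding gadd_def cyc_emb_def by auto
    thus "t = t'" using t by (simp add: power2_eq_square)
  qed
  show "spectral_set p (cyc_emb p l ` {..<p*p})"
  proof (rule spectral_setI_cyc_emb[OF p0 order_refl _ finite_lessThan, where b="\<lambda>j. (j, 0)"])
    show "\<forall>i\<in>{..<p*p}. (i, 0::nat) \<in> grpG p" using p0 by (auto simp: grpG_def power2_eq_square)
    show "(\<Sum>t\<in>{..<p*p}. zeta p (int t * (cyc_freq p l (i, 0) - cyc_freq p l (j, 0)))) = 0"
      if "i \<in> {..<p*p}" "j \<in> {..<p*p}" "i \<noteq> j" for i j
      using diff[of i j] that by (simp add: cyc_freq_def)
    show "(\<Sum>i\<in>{..<p*p}. zeta p ((int t - int t') * cyc_freq p l (i, 0))) = 0"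
      if "t \<in> {..<p*p}" "t' \<in> {..<p*p}" "t \<noteq> t'" for t t'
      using diff[of t t'] that by (simp add: cyc_freq_def mult.commute)
  qed (use p0 in \<open>auto simp: lessThan_empty_iff\<close>)
qed

lemma tile_cyc_emb_coset:
  assumes p0: "p > 0" and r: "r < p" and X: "X = (\<lambda>k. r + k*p) ` {..<p}"
  shows "tile p (cyc_emb p l ` X)"
proof -
  have Xlt: "X \<subseteq> {..<p*p}" unfolding X using mult_add_less_sq[OF r] by (auto simp: add.commute)
  have XG: "cyc_emb p l ` X \<subseteq> grpG p" using Xlt cyc_emb_in_grpG[OF p0] by auto
  have injr: "inj_on (\<lambda>k. r + k*p) {..<p}" using p0 by (auto simp: inj_on_def)
  have cX: "card X = p" unfolding X by (simp add: card_image[OF injr])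
  have sq: "{..<p} \<times> {..<p} \<subseteq> grpG p" using mult_add_less_sq[of _ p 0] by (auto simp: grpG_def power2_eq_square)
  show "tile p (cyc_emb p l ` X)"
  proof (rule tileI_image[OF p0 XG inj_cyc_emb sq])
    show "card X * card ({..<p} \<times> {..<p}) = p^3" using cX by (simp add: card_cartesian_product power3_eq_cube)
    fix t t' \<tau> \<tau>' assume t: "t \<in> X" "t' \<in> X" and \<tau>: "\<tau> \<in> {..<p} \<times> {..<p}" "\<tau>' \<in> {..<p} \<times> {..<p}"
      and e: "gadd p (cyc_emb p l t) \<tau> = gadd p (cyc_emb p l t') \<tau>'"
    obtain k k' where kk: "k < p" "k' < p" "t = r + k*p" "t' = r + k'*p" using t X by auto
    have "(t + fst \<tau>) mod (p*p) = (t' + fst \<tau>') mod (p*p)"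
      using e unfolding gadd_def cyc_emb_def by (simp add: power2_eq_square)
    hence d: "int (p*p) dvd int p * (int k - int k') + (int (fst \<tau>) - int (fst \<tau>'))"
      using dvd_diff_if_mod_eq unfolding kk by (fastforce simp: algebra_simps)
    hence "int p dvd int p * (int k - int k') + (int (fst \<tau>) - int (fst \<tau>'))"
      by (metis dvd_mult_left of_nat_mult)
    hence "int p dvd int (fst \<tau>) - int (fst \<tau>')" by (simp add: dvd_add_right_iff)
    hence "fst \<tau> = fst \<tau>'" using \<tau> by (intro nat_eq_if_dvd_diff[of p]) auto
    hence "int p * int p dvd int p * (int k - int k')" using d by simp
    hence "int p dvd int k - int k'" using p0 by simp
    hence "k = k'" using kk by (intro nat_eq_if_dvd_diff[of p]) auto
    thus "t = t'" using kk by simp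
  qed
qed

lemma spectral_cyc_emb_coset:
  assumes p0: "p > 0" and r: "r < p" and X: "X = (\<lambda>k. r + k*p) ` {..<p}"
  shows "spectral_set p (cyc_emb p l ` X)"
proof -
  have Xlt: "X \<subseteq> {..<p*p}" unfolding X using mult_add_less_sq[OF r] by (auto simp: add.commute)
  have injr: "inj_on (\<lambda>k. r + k*p) {..<p}" using p0 by (auto simp: inj_on_def)
  have sq: "{..<p} \<times> {..<p} \<subseteq> grpG p" using mult_add_less_sq[of _ p 0] by (auto simp: grpG_def power2_eq_square)
  show "spectral_set p (cyc_emb p l ` X)"
  proof (rule spectral_setI_cyc_emb[OF p0 Xlt _ finite_lessThan, where b="\<lambda>j. (j, 0)"])
    show "\<forall>i\<in>{..<p}. (i, 0::nat) \<in> grpG p" using sq by auto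
    fix i j assume ij: "i \<in> {..<p}" "j \<in> {..<p}" "i \<noteq> j"
    define m where "m = int i - int j"
    have nm: "\<not> int p dvd m" unfolding m_def using ij not_dvd_diff_if_less by auto
    have "(\<Sum>t\<in>X. zeta p (int t * (cyc_freq p l (i, 0) - cyc_freq p l (j, 0))))
        = zeta p (int r * m) * (\<Sum>k<p. zeta p (int k * (int p * m)))"
      unfolding X m_def cyc_freq_def sum_distrib_left
      by (simp add: sum.reindex[OF injr] zeta_add[symmetric] algebra_simps)
    thus "(\<Sum>t\<in>X. zeta p (int t * (cyc_freq p l (i, 0) - cyc_freq p l (j, 0)))) = 0"
      using zeta_subperiod_sum[OF p0 nm] by simp
  next
    fix t t' assume tt: "t \<in> X" "t' \<in> X" "t \<noteq> t'"
    obtain k k' where kk: "k < p" "k' < p" "t = r + k*p" "t' = r + k'*p" using tt X by auto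
    hence nm: "\<not> int p dvd (int k - int k')" using tt not_dvd_diff_if_less by auto
    have "(\<Sum>i\<in>{..<p}. zeta p ((int t - int t') * cyc_freq p l (i, 0))) = (\<Sum>i<p. zeta p (int i * (int p * (int k - int k'))))"
      unfolding cyc_freq_def kk by (intro sum.cong refl) (simp add: algebra_simps)
    thus "(\<Sum>i\<in>{..<p}. zeta p ((int t - int t') * cyc_freq p l (i, 0))) = 0"
      using zeta_subperiod_sum[OF p0 nm] by simp
  qed (use p0 X in \<open>auto simp: lessThan_empty_iff\<close>)
qed

lemma tile_cyc_emb_transversal:
  assumes p0: "p > 0" and X: "X \<subseteq> {..<p*p}" and cX: "card X = p" and inj: "inj_on (\<lambda>t. t mod p) X"
  shows "tile p (cyc_emb p l ` X)"
proof -
  have XG: "cyc_emb p l ` X \<subseteq> grpG p" using X cyc_emb_in_grpG[OF p0] by auto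
  define T where "T = (\<lambda>x. (p * fst x, snd x)) ` ({..<p} \<times> {..<p})"
  show "tile p (cyc_emb p l ` X)"
  proof (rule tileI_image[OF p0 XG inj_cyc_emb, of T])
    show "T \<subseteq> grpG p" unfolding T_def grpG_def using p0 by (auto simp: power2_eq_square)
    have "inj_on (\<lambda>x. (p * fst x, snd x)) ({..<p} \<times> {..<p})" using p0 by (auto simp: inj_on_def prod_eq_iff)
    hence "card T = p*p" unfolding T_def by (simp add: card_image card_cartesian_product)
    thus "card X * card T = p^3" using cX by (simp add: power3_eq_cube)
    fix t t' \<tau> \<tau>' assume t: "t \<in> X" "t' \<in> X" and \<tau>: "\<tau> \<in> T" "\<tau>' \<in> T"
      and e: "gadd p (cyc_emb p l t) \<tau> = gadd p (cyc_emb p l t') \<tau>'"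
    obtain s s' where ss: "fst \<tau> = p * s" "fst \<tau>' = p * s'" using \<tau> unfolding T_def by auto
    have "(t + fst \<tau>) mod (p*p) = (t' + fst \<tau>') mod (p*p)"
      using e unfolding gadd_def cyc_emb_def by (simp add: power2_eq_square)
    hence "int (p*p) dvd (int t - int t') + int p * (int s - int s')"
      using dvd_diff_if_mod_eq unfolding ss by (fastforce simp: algebra_simps)
    hence "int p dvd (int t - int t') + int p * (int s - int s')" by (metis dvd_mult_left of_nat_mult)
    hence "int p dvd int t - int t'" by (simp add: dvd_add_left_iff)
    hence "t mod p = t' mod p" by (metis mod_eq_dvd_iff of_nat_eq_iff of_nat_mod)
    thus "t = t'" using inj_onD[OF inj _ t] by simp
  qed
qed

lemma spectral_cyc_emb_transversal:
  assumes p0: "p > 0" and X: "X \<subseteq> {..<p*p}" and cX: "card X = p" and inj: "inj_on (\<lambda>t. t mod p) X"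
  shows "spectral_set p (cyc_emb p l ` X)"
proof -
  have fin: "finite X" using X finite_subset by blast
  have residues: "(\<lambda>t. t mod p) ` X = {..<p}"
    using image_eq_lessThan_if_inj[OF cX _ inj] p0 by simp
  show "spectral_set p (cyc_emb p l ` X)"
  proof (rule spectral_setI_cyc_emb[OF p0 X _ finite_lessThan, where b="\<lambda>j. (p*j, 0)"])
    show "\<forall>i\<in>{..<p}. (p*i, 0::nat) \<in> grpG p" using p0 by (auto simp: grpG_def power2_eq_square)
    fix i j assume ij: "i \<in> {..<p}" "j \<in> {..<p}" "i \<noteq> j"
    define m where "m = int i - int j"
    have nm: "\<not> int p dvd m" unfolding m_def using ij not_dvd_diff_if_less by auto
    have "(\<Sum>t\<in>X. zeta p (int t * (cyc_freq p l (p*i, 0) - cyc_freq p l (p*j, 0))))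
        = (\<Sum>t\<in>X. zeta p (int (t mod p) * (int p * m)))"
    proof (rule sum.cong[OF refl])
      fix t
      have "int t = int (t mod p) + int p * int (t div p)" by (metis of_nat_add of_nat_mult mod_mult_div_eq)
      hence "int t * (int p * m) - int (t mod p) * (int p * m) = int (p*p) * (int (t div p) * m)"
        by (simp add: algebra_simps)
      hence "int (p*p) dvd int t * (int p * m) - int (t mod p) * (int p * m)" by (metis dvd_triv_left)
      hence "(int t * (int p * m)) mod int (p*p) = (int (t mod p) * (int p * m)) mod int (p*p)"
        by (simp only: mod_eq_dvd_iff)
      moreover have "cyc_freq p l (p*i, 0) - cyc_freq p l (p*j, 0) = int p * m"
        unfolding cyc_freq_def m_def by (simp add: algebra_simps)
      ultimately show "zeta p (int t * (cyc_freq p l (p*i, 0) - cyc_freq p l (p*j, 0))) = zeta p (int (t mod p) * (int p * m))"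
        using zeta_cong[OF p0] by simp
    qed
    also have "\<dots> = (\<Sum>k\<in>(\<lambda>t. t mod p) ` X. zeta p (int k * (int p * m)))"
      by (simp add: sum.reindex[OF inj])
    finally show "(\<Sum>t\<in>X. zeta p (int t * (cyc_freq p l (p*i, 0) - cyc_freq p l (p*j, 0)))) = 0"
      unfolding residues using zeta_subperiod_sum[OF p0 nm] by simp
  next
    fix t t' assume tt: "t \<in> X" "t' \<in> X" "t \<noteq> t'"
    have "t mod p \<noteq> t' mod p" using tt inj by (metis inj_on_eq_iff)
    hence nm: "\<not> int p dvd (int t - int t')" by (metis mod_eq_dvd_iff of_nat_eq_iff of_nat_mod)
    have "(\<Sum>i\<in>{..<p}. zeta p ((int t - int t') * cyc_freq p l (p*i, 0))) = (\<Sum>i<p. zeta p (int i * (int p * (int t - int t'))))"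
      unfolding cyc_freq_def by (intro sum.cong refl) (simp add: algebra_simps)
    thus "(\<Sum>i\<in>{..<p}. zeta p ((int t - int t') * cyc_freq p l (p*i, 0))) = 0"
      using zeta_subperiod_sum[OF p0 nm] by simp
  qed (use p0 cX in \<open>auto simp: lessThan_empty_iff\<close>)
qed

lemma tile_spectral_if_cyclic_shape:
  assumes p: "prime p" and X: "X \<subseteq> {..<p*p}" and shape: "cyclic_shape p X"
  shows "tile p (cyc_emb p l ` X) \<and> spectral_set p (cyc_emb p l ` X)"
proof -
  have p0: "p > 0" using p prime_gt_0_nat by blast
  consider "card X = 1" | "X = {..<p*p}" | "card X = p" "periodic_mod_sq p X"
    | "card X = p" "inj_on (\<lambda>t. t mod p) X"
    using shape unfolding cyclic_shape_def by blast
  thus ?thesis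
  proof cases
    case 1
    have "card (cyc_emb p l ` X) = 1" using 1 by (simp add: card_image[OF inj_cyc_emb])
    moreover have "cyc_emb p l ` X \<subseteq> grpG p" using X cyc_emb_in_grpG[OF p0] by auto
    ultimately show ?thesis using singleton_tile_spectral[OF p0] by blast
  next
    case 3
    then obtain r where "r < p" "X = (\<lambda>k. r + k*p) ` {..<p}"
      using periodic_mod_sq_card_p[OF p0 X] by blast
    thus ?thesis using tile_cyc_emb_coset[OF p0] spectral_cyc_emb_coset[OF p0] by blast
  qed (use tile_spectral_cyc_emb_full[OF p0] tile_cyc_emb_transversal[OF p0 X] spectral_cyc_emb_transversal[OF p0 X] in auto)
qed

lemma tile_iff_spectral_in_max_subgroup_cyclic:
  assumes p: "prime p" and A: "A \<subseteq> max_subgroup_cyclic p l" and ne: "A \<noteq> {}"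
  shows "tile p A \<longleftrightarrow> spectral_set p A"
proof -
  define X where "X = fst ` A"
  have "a = cyc_emb p l (fst a)" if "a \<in> A" for a
    using that A unfolding max_subgroup_cyclic_def cyc_emb_def by (auto simp: prod_eq_iff)
  hence AX: "A = cyc_emb p l ` X" unfolding X_def image_image by (auto simp: image_iff)
  have X: "X \<subseteq> {..<p*p}" using A unfolding X_def max_subgroup_cyclic_def grpG_def by (auto simp: power2_eq_square)
  have "X \<noteq> {}" using ne unfolding X_def by simp
  show ?thesis unfolding AX
  proof
    assume "tile p (cyc_emb p l ` X)"
    thus "spectral_set p (cyc_emb p l ` X)"
      using cyclic_shape_if_tile[OF p X] tile_spectral_if_cyclic_shape[OF p X] by blast
  next
    assume "spectral_set p (cyc_emb p l ` X)"
    thus "tile p (cyc_emb p l ` X)"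
      using cyclic_shape_if_spectral[OF p X \<open>X \<noteq> {}\<close>] tile_spectral_if_cyclic_shape[OF p X] by blast
  qed
qed

section \<open>Subsets of the noncyclic maximal subgroup\<close>

text \<open>\<open>plane_emb p\<close> identifies \<open>\<int>/p \<times> \<int>/p\<close> with \<open>p(\<int>/p\<^sup>2) \<times> \<int>/p\<close>; on it the character \<open>\<chi>_d\<close> is
  \<open>x \<mapsto> \<zeta>^(p * linform d1 d2 x)\<close>.\<close>

definition plane_emb :: "nat \<Rightarrow> nat \<times> nat \<Rightarrow> nat \<times> nat" where
  "plane_emb p x = (p * fst x, snd x)"

text \<open>The three shapes of a tile (equivalently, spectral set) in \<open>\<int>/p \<times> \<int>/p\<close>: a point, the whole
  plane, and \<open>p\<close> points on which some nonzero linear form takes every value mod \<open>p\<close> once.\<close>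

definition planar_shape :: "nat \<Rightarrow> (nat \<times> nat) set \<Rightarrow> bool" where
  "planar_shape p Y \<longleftrightarrow> card Y = 1 \<or> Y = {..<p} \<times> {..<p} \<or>
     (card Y = p \<and> (\<exists>D1 D2. \<not> (int p dvd D1 \<and> int p dvd D2) \<and> inj_on (\<lambda>x. nat (linform D1 D2 x mod int p)) Y))"

lemma inj_plane_emb: "p > 0 \<Longrightarrow> inj_on (plane_emb p) Y"
  unfolding plane_emb_def inj_on_def by (simp add: prod_eq_iff)

lemma plane_emb_in_grpG:
  assumes "p > 0" and "x \<in> {..<p} \<times> {..<p}"
  shows "plane_emb p x \<in> grpG p"
proof -
  have "p * fst x < p * p" using assms by auto
  thus ?thesis using assms unfolding plane_emb_def grpG_def by (auto simp: power2_eq_square)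
qed

lemma chiG_plane_emb:
  assumes "p > 0"
  shows "chiG p d (plane_emb p x) = zeta p (int p * linform (int (fst d)) (int (snd d)) x)"
  unfolding chiG_zeta[OF assms] plane_emb_def linform_def by (simp add: algebra_simps)

lemma char_sum_plane_emb:
  assumes "p > 0"
  shows "char_sum p (plane_emb p ` Y) d = (\<Sum>x\<in>Y. zeta p (int p * linform (int (fst d)) (int (snd d)) x))"
  unfolding char_sum_def by (simp add: sum.reindex[OF inj_plane_emb[OF assms]] chiG_plane_emb[OF assms])

lemma innerA_plane_emb:
  assumes "p > 0"
  shows "innerA (plane_emb p ` Y) (chiG p b) (chiG p b') =
     (\<Sum>x\<in>Y. zeta p (int p * linform (int (fst b) - int (fst b')) (int (snd b) - int (snd b')) x))"
proof -
  have "innerA (plane_emb p ` Y) (chiG p b) (chiG p b') = (\<Sum>x\<in>Y. chiG p b (plane_emb p x) * cnj (chiG p b' (plane_emb p x)))"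
    unfolding innerA_def by (simp add: sum.reindex[OF inj_plane_emb[OF assms]])
  thus ?thesis unfolding chiG_plane_emb[OF assms] zeta_diff[symmetric] linform_def by (simp add: algebra_simps)
qed

lemma planar_shape_if_tile:
  assumes p: "prime p" and Y: "Y \<subseteq> {..<p} \<times> {..<p}" and tile: "tile p (plane_emb p ` Y)"
  shows "planar_shape p Y"
proof -
  have p0: "p > 0" using p prime_gt_0_nat by blast
  have fin: "finite Y" using Y finite_subset by (metis finite_SigmaI finite_lessThan)
  have AG: "plane_emb p ` Y \<subseteq> grpG p" using Y plane_emb_in_grpG[OF p0] by auto
  have cA: "card (plane_emb p ` Y) = card Y" by (rule card_image[OF inj_plane_emb[OF p0]])
  have "card Y dvd p^3" using tile_card_dvd[OF p0 tile AG] cA by simp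
  moreover have "card Y \<le> p*p" using card_mono[OF _ Y] by (simp add: card_cartesian_product)
  ultimately have "card Y = 1 \<or> card Y = p \<or> card Y = p*p" by (rule dvd_cube_le_sq_cases[OF p])
  then consider "card Y = 1" | "card Y = p" | "card Y = p*p" by argo
  thus ?thesis
  proof cases
    case 2
    have "card (plane_emb p ` Y) \<noteq> 1" using cA 2 prime_gt_1_nat[OF p] by simp
    then obtain d where "d \<in> grpG p" "d \<noteq> (0,0)" "char_sum p (plane_emb p ` Y) d = 0"
      by (rule tile_char_sum_vanishes[OF p0 tile AG])
    hence vanish: "(\<Sum>x\<in>Y. zeta p (int p * linform (int (fst d)) (int (snd d)) x)) = 0"
      by (simp add: char_sum_plane_emb[OF p0])
    have "Y \<noteq> {}" using 2 p0 by auto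
    hence "\<not> (int p dvd int (fst d) \<and> int p dvd int (snd d))"
      by (rule planar_vanishing_sum_nonzero[OF p0 fin _ vanish])
    moreover have "\<forall>x\<in>Y. nat (linform (int (fst d)) (int (snd d)) x mod int p) < p"
      using p0 by (simp add: nat_less_iff)
    ultimately have "inj_on (\<lambda>x. nat (linform (int (fst d)) (int (snd d)) x mod int p)) Y"
      using inj_on_if_equal_fibers[where f="\<lambda>x. nat (linform (int (fst d)) (int (snd d)) x mod int p)", OF fin 2 _ _ p0]
        planar_vanishing_sum_equidistributed[OF p Y vanish] by blast
    thus ?thesis using 2 \<open>\<not> (int p dvd int (fst d) \<and> int p dvd int (snd d))\<close>
      unfolding planar_shape_def by blast
  next
    case 3
    hence "card Y = card ({..<p} \<times> {..<p})" by (simp add: card_cartesian_product)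
    hence "Y = {..<p} \<times> {..<p}" using card_subset_eq[OF _ Y] by blast
    thus ?thesis unfolding planar_shape_def by simp
  qed (simp add: planar_shape_def)
qed

text \<open>With more than \<open>p\<close> spectral points, two of them differ by a multiple of any given direction
  \<open>v \<noteq> 0\<close> (pigeonhole on the determinant with \<open>v\<close> mod \<open>p\<close>); their orthogonality relation is a
  Galois conjugate of the vanishing of the character sum at \<open>v\<close>.\<close>

lemma char_sum_plane_emb_vanishes_if_large_spectrum:
  assumes p: "prime p" and Y: "Y \<subseteq> {..<p} \<times> {..<p}" and ne: "Y \<noteq> {}"
    and large: "card B > p"
    and orth: "\<And>b b'. b \<in> B \<Longrightarrow> b' \<in> B \<Longrightarrow> b \<noteq> b' \<Longrightarrow>
       (\<Sum>x\<in>Y. zeta p (int p * linform (int (fst b) - int (fst b')) (int (snd b) - int (snd b')) x)) = 0"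
    and v: "\<not> (int p dvd int (fst v) \<and> int p dvd int (snd v))"
  shows "char_sum p (plane_emb p ` Y) v = 0"
proof -
  have p0: "p > 0" using p prime_gt_0_nat by blast
  have fin: "finite Y" using Y finite_subset by (metis finite_SigmaI finite_lessThan)
  define det where "det b = int (fst b) * int (snd v) - int (snd b) * int (fst v)" for b :: "nat \<times> nat"
  have "\<exists>b\<in>B. \<exists>b'\<in>B. b \<noteq> b' \<and> int p dvd det b - det b'"
  proof (rule ccontr)
    assume "\<not> ?thesis"
    hence "card B \<le> p" by (intro card_le_if_diffs_not_dvd[OF p0, of B det]) blast
    thus False using large by simp
  qed
  then obtain b b' where bb: "b \<in> B" "b' \<in> B" "b \<noteq> b'" and c0: "int p dvd det b - det b'" by blast
  define D1 where "D1 = int (fst b) - int (fst b')"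
  define D2 where "D2 = int (snd b) - int (snd b')"
  have vanish: "(\<Sum>x\<in>Y. zeta p (int p * linform D1 D2 x)) = 0"
    unfolding D1_def D2_def by (rule orth[OF bb])
  have nd: "\<not> (int p dvd D1 \<and> int p dvd D2)" by (rule planar_vanishing_sum_nonzero[OF p0 fin ne vanish])
  have "det b - det b' = D1 * int (snd v) - D2 * int (fst v)" unfolding det_def D1_def D2_def by (simp add: algebra_simps)
  then obtain k where k: "int p dvd k * D1 - int (fst v)" "int p dvd k * D2 - int (snd v)"
    using proportional_mod_prime[OF p nd] c0 by auto
  have nk: "\<not> int p dvd k"
  proof
    assume "int p dvd k"
    hence "int p dvd int (fst v)" "int p dvd int (snd v)" using k by (metis dvd_diff_right_iff dvd_mult2)+
    thus False using v by simp
  qed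
  have "zeta p (int p * linform (int (fst v)) (int (snd v)) x) = zeta p (int p * (k * linform D1 D2 x))" for x
  proof (rule zeta_p_mult_cong[OF p0])
    have "linform (int (fst v)) (int (snd v)) x - k * linform D1 D2 x =
          (- int (fst x)) * (k * D1 - int (fst v)) + (- int (snd x)) * (k * D2 - int (snd v))"
      unfolding linform_def by (simp add: algebra_simps)
    thus "int p dvd linform (int (fst v)) (int (snd v)) x - k * linform D1 D2 x" using k by simp
  qed
  thus ?thesis unfolding char_sum_plane_emb[OF p0] using planar_vanishing_sum_scale[OF p Y vanish nk] by simp
qed

lemma plane_eq_if_char_sums_vanish:
  assumes p0: "p > 0" and Y: "Y \<subseteq> {..<p} \<times> {..<p}" and ne: "Y \<noteq> {}"
    and vanish: "\<And>v. v \<in> grpG p \<Longrightarrow> \<not> (int p dvd int (fst v) \<and> int p dvd int (snd v)) \<Longrightarrow>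
        char_sum p (plane_emb p ` Y) v = 0"
  shows "Y = {..<p} \<times> {..<p}"
proof
  show "{..<p} \<times> {..<p} \<subseteq> Y"
  proof
    fix y assume y: "y \<in> {..<p} \<times> {..<p}"
    define A where "A = plane_emb p ` Y"
    define x where "x = plane_emb p y"
    define Z where "Z = {d\<in>grpG p. int p dvd int (fst d) \<and> int p dvd int (snd d)}"
    have AG: "A \<subseteq> grpG p" unfolding A_def using Y plane_emb_in_grpG[OF p0] by auto
    have xG: "x \<in> grpG p" unfolding x_def by (rule plane_emb_in_grpG[OF p0 y])
    have fZ: "finite Z" unfolding Z_def using finite_grpG by simp
    have fY: "finite Y" using Y finite_subset by (metis finite_SigmaI finite_lessThan)
    have one: "zeta p (int p * linform (int (fst d)) (int (snd d)) z) = 1" if "d \<in> Z" for d z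
      using that zeta_p_mult_linform_eq_1[OF p0] unfolding Z_def by blast
    have "(\<Sum>d\<in>grpG p. char_sum p A d * cnj (chiG p d x)) = (\<Sum>d\<in>Z. char_sum p A d * cnj (chiG p d x))"
      using vanish unfolding A_def Z_def by (intro sum.mono_neutral_right[OF finite_grpG]) auto
    also have "\<dots> = of_nat (card Z * card Y)"
      using one unfolding A_def x_def char_sum_plane_emb[OF p0] chiG_plane_emb[OF p0] by simp
    finally have e: "(\<Sum>d\<in>grpG p. char_sum p A d * cnj (chiG p d x)) = of_nat (card Z * card Y)" .
    have "(0,0) \<in> Z" unfolding Z_def using p0 by (simp add: grpG_def)
    hence "card Z * card Y \<noteq> 0" using fZ fY ne by auto
    hence "x \<in> A" using e char_sum_inversion[OF p0 AG xG] by (auto split: if_splits)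
    thus "y \<in> Y" using inj_plane_emb[OF p0, of UNIV] unfolding A_def x_def by (auto simp: inj_on_eq_iff)
  qed
qed (rule Y)

lemma planar_shape_if_spectral:
  assumes p: "prime p" and Y: "Y \<subseteq> {..<p} \<times> {..<p}" and ne: "Y \<noteq> {}"
    and spec: "spectral_set p (plane_emb p ` Y)"
  shows "planar_shape p Y"
proof (cases "card Y = 1")
  case False
  have p0: "p > 0" using p prime_gt_0_nat by blast
  have fin: "finite Y" using Y finite_subset by (metis finite_SigmaI finite_lessThan)
  have cA: "card (plane_emb p ` Y) = card Y" by (rule card_image[OF inj_plane_emb[OF p0]])
  obtain B where fB: "finite B" and cB: "card Y \<le> card B"
    and orth: "\<And>b b'. b \<in> B \<Longrightarrow> b' \<in> B \<Longrightarrow> b \<noteq> b' \<Longrightarrow> innerA (plane_emb p ` Y) (chiG p b) (chiG p b') = 0"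
    using spectral_setE[OF spec] cA by metis
  note vanish = orth[unfolded innerA_plane_emb[OF p0]]
  have cpos: "card Y > 0" using fin ne by (simp add: card_gt_0_iff)
  hence "card B \<ge> 2" using cB False by simp
  then obtain b0 b0' where b0: "b0 \<in> B" "b0' \<in> B" "b0 \<noteq> b0'" using two_elemsE[OF fB] by blast
  show ?thesis
  proof (cases "card B \<le> p")
    case True
    define D1 where "D1 = int (fst b0) - int (fst b0')"
    define D2 where "D2 = int (snd b0) - int (snd b0')"
    have s0: "(\<Sum>x\<in>Y. zeta p (int p * linform D1 D2 x)) = 0"
      unfolding D1_def D2_def by (rule vanish[OF b0])
    have cY: "card Y = p" using planar_vanishing_sum_card_dvd[OF p Y s0] cB cpos True dvd_le_imp_eq by auto
    have "\<forall>x\<in>Y. nat (linform D1 D2 x mod int p) < p" using p0 by (simp add: nat_less_iff)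
    hence "inj_on (\<lambda>x. nat (linform D1 D2 x mod int p)) Y"
      using inj_on_if_equal_fibers[where f="\<lambda>x. nat (linform D1 D2 x mod int p)", OF fin cY _ _ p0]
        planar_vanishing_sum_equidistributed[OF p Y s0] by blast
    thus ?thesis using cY planar_vanishing_sum_nonzero[OF p0 fin ne s0] unfolding planar_shape_def by blast
  next
    case False
    have "char_sum p (plane_emb p ` Y) v = 0" if "\<not> (int p dvd int (fst v) \<and> int p dvd int (snd v))" for v
      using char_sum_plane_emb_vanishes_if_large_spectrum[where B=B, OF p Y ne _ vanish that] False by simp
    hence "Y = {..<p} \<times> {..<p}" using plane_eq_if_char_sums_vanish[OF p0 Y ne] by blast
    thus ?thesis unfolding planar_shape_def by simp
  qed
qed (simp add: planar_shape_def)

lemma spectral_setI_plane_emb: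
  assumes p0: "p > 0" and Y: "Y \<subseteq> {..<p} \<times> {..<p}" and ne: "Y \<noteq> {}"
    and fI: "finite I" and I: "I \<noteq> {}" and b: "\<forall>i\<in>I. b i \<in> grpG p"
    and orth: "\<And>i j. i \<in> I \<Longrightarrow> j \<in> I \<Longrightarrow> i \<noteq> j \<Longrightarrow>
       (\<Sum>x\<in>Y. zeta p (int p * linform (int (fst (b i)) - int (fst (b j))) (int (snd (b i)) - int (snd (b j))) x)) = 0"
    and dual: "\<And>x x'. x \<in> Y \<Longrightarrow> x' \<in> Y \<Longrightarrow> x \<noteq> x' \<Longrightarrow>
       (\<Sum>i\<in>I. zeta p (int p * linform (int (fst x) - int (fst x')) (int (snd x) - int (snd x')) (b i))) = 0"
  shows "spectral_set p (plane_emb p ` Y)"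
proof (rule spectral_setI_image[OF p0 _ ne inj_plane_emb[OF p0] fI I b])
  have prod: "chiG p d (plane_emb p x) * cnj (chiG p d' (plane_emb p x')) =
      zeta p (int p * linform (int (fst d)) (int (snd d)) x - int p * linform (int (fst d')) (int (snd d')) x')"
    for d d' x x'
    unfolding chiG_plane_emb[OF p0] zeta_diff ..
  show "finite Y" using Y finite_subset by (metis finite_SigmaI finite_lessThan)
  show "(\<Sum>x\<in>Y. chiG p (b i) (plane_emb p x) * cnj (chiG p (b j) (plane_emb p x))) = 0"
    if "i \<in> I" "j \<in> I" "i \<noteq> j" for i j
    using orth[OF that] unfolding prod linform_def by (simp add: algebra_simps)
  show "(\<Sum>i\<in>I. chiG p (b i) (plane_emb p x) * cnj (chiG p (b i) (plane_emb p x'))) = 0"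
    if "x \<in> Y" "x' \<in> Y" "x \<noteq> x'" for x x'
    using dual[OF that] unfolding prod linform_def by (simp add: algebra_simps)
qed

lemma tile_spectral_plane_emb_full:
  assumes p0: "p > 0"
  shows "tile p (plane_emb p ` ({..<p} \<times> {..<p}))" and "spectral_set p (plane_emb p ` ({..<p} \<times> {..<p}))"
proof -
  have sq: "{..<p} \<times> {..<p} \<subseteq> grpG p" using mult_add_less_sq[of _ p 0] by (auto simp: grpG_def power2_eq_square)
  have YG: "plane_emb p ` ({..<p} \<times> {..<p}) \<subseteq> grpG p" using plane_emb_in_grpG[OF p0] by auto
  show "tile p (plane_emb p ` ({..<p} \<times> {..<p}))"
  proof (rule tileI_image[OF p0 YG inj_plane_emb[OF p0], of "(\<lambda>i. (i,0)) ` {..<p}"])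
    show "(\<lambda>i. (i, 0::nat)) ` {..<p} \<subseteq> grpG p" using sq by auto
    have "card ((\<lambda>i. (i, 0::nat)) ` {..<p}) = p" by (simp add: card_image inj_on_def)
    thus "card ({..<p} \<times> {..<p}) * card ((\<lambda>i. (i, 0::nat)) ` {..<p}) = p^3"
      by (simp add: card_cartesian_product power3_eq_cube)
    fix x x' \<tau> \<tau>' assume x: "x \<in> {..<p} \<times> {..<p}" "x' \<in> {..<p} \<times> {..<p}"
      and \<tau>: "\<tau> \<in> (\<lambda>i. (i, 0::nat)) ` {..<p}" "\<tau>' \<in> (\<lambda>i. (i, 0::nat)) ` {..<p}"
      and e: "gadd p (plane_emb p x) \<tau> = gadd p (plane_emb p x') \<tau>'"
    obtain i i' where ii: "i < p" "i' < p" "\<tau> = (i,0)" "\<tau>' = (i',0)" using \<tau> by auto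
    have "fst x * p + i < p*p" "fst x' * p + i' < p*p"
      using mult_add_less_sq[of i p "fst x"] mult_add_less_sq[of i' p "fst x'"] ii x by auto
    moreover have "(p * fst x + i) mod (p*p) = (p * fst x' + i') mod (p*p)" "snd x mod p = snd x' mod p"
      using e unfolding gadd_def plane_emb_def ii by (simp_all add: power2_eq_square)
    moreover have "snd x < p" "snd x' < p" using x by auto
    ultimately have e1: "p * fst x + i = p * fst x' + i'" and "snd x = snd x'"
      by (simp_all add: mult.commute add.commute)
    moreover have "i = i'" using e1 ii by (metis mod_mult_self3 mod_less mult.commute)
    ultimately show "x = x'" using p0 by (simp add: prod_eq_iff)
  qed
  show "spectral_set p (plane_emb p ` ({..<p} \<times> {..<p}))"
  proof (rule spectral_setI_plane_emb[OF p0 order_refl, where I="{..<p} \<times> {..<p}" and b=id])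
    show "\<forall>i\<in>{..<p} \<times> {..<p}. id i \<in> grpG p" using sq by auto
    show "(\<Sum>x\<in>{..<p} \<times> {..<p}. zeta p (int p * linform (int (fst (id i)) - int (fst (id j))) (int (snd (id i)) - int (snd (id j))) x)) = 0"
      if "i \<in> {..<p} \<times> {..<p}" "j \<in> {..<p} \<times> {..<p}" "i \<noteq> j" for i j
      using zeta_plane_sum_eq_0[OF p0 not_dvd_pair_diff_if_less[OF that]] by simp
    show "(\<Sum>i\<in>{..<p} \<times> {..<p}. zeta p (int p * linform (int (fst x) - int (fst x')) (int (snd x) - int (snd x')) (id i))) = 0"
      if "x \<in> {..<p} \<times> {..<p}" "x' \<in> {..<p} \<times> {..<p}" "x \<noteq> x'" for x x'
      using zeta_plane_sum_eq_0[OF p0 not_dvd_pair_diff_if_less[OF that]] by simp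
  qed (use p0 in auto)
qed

lemma kernel_line_mod_prime:
  assumes p: "prime p" and nd: "\<not> (int p dvd D1 \<and> int p dvd D2)"
  obtains xk yk :: "nat \<Rightarrow> nat"
  where "\<And>k. xk k < p" "\<And>k. yk k < p"
    and "\<And>k. int p dvd int (xk k) - int k * D2" "\<And>k. int p dvd int (yk k) + int k * D1"
    and "\<And>k k'. k < p \<Longrightarrow> k' < p \<Longrightarrow> xk k = xk k' \<Longrightarrow> yk k = yk k' \<Longrightarrow> k = k'"
proof -
  have p0: "p > 0" using p prime_gt_0_nat by blast
  define xk where "xk k = nat ((int k * D2) mod int p)" for k :: nat
  define yk where "yk k = nat ((int k * (- D1)) mod int p)" for k :: nat
  have xk_lt: "xk k < p" and yk_lt: "yk k < p" for k unfolding xk_def yk_def using p0 by (simp_all add: nat_less_iff)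
  have xk_dv: "int p dvd int (xk k) - int k * D2" for k unfolding xk_def by (rule dvd_nat_mod_diff[OF p0])
  have yk_dv: "int p dvd int (yk k) + int k * D1" for k
    using dvd_nat_mod_diff[OF p0, of "int k * - D1"] unfolding yk_def by simp
  have "k = k'" if "k < p" "k' < p" "xk k = xk k'" "yk k = yk k'" for k k'
  proof (rule ccontr)
    assume "k \<noteq> k'"
    hence nk: "\<not> int p dvd int k - int k'" using not_dvd_diff_if_less that by auto
    have "(int k - int k') * D2 = (int (xk k') - int k' * D2) - (int (xk k) - int k * D2)"
      using that(3) by (simp add: algebra_simps)
    hence "int p dvd (int k - int k') * D2" using xk_dv by (metis dvd_diff)
    moreover have "(int k - int k') * D1 = (int (yk k) + int k * D1) - (int (yk k') + int k' * D1)"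
      using that(4) by (simp add: algebra_simps)
    hence "int p dvd (int k - int k') * D1" using yk_dv by (metis dvd_diff)
    ultimately show False using nk nd p by (simp add: prime_dvd_mult_iff prime_nat_int_transfer)
  qed
  from that[OF xk_lt yk_lt xk_dv yk_dv this] show thesis .
qed

text \<open>A complement of a transversal of the level sets of \<open>L = linform D1 D2\<close>: the order-\<open>p\<close>
  subgroup \<open>{(i, 0)}\<close> plus the embedded kernel line of \<open>L\<close>, spanned by \<open>(D2, -D1)\<close> mod \<open>p\<close>.\<close>

lemma tile_plane_emb_transversal:
  assumes p: "prime p" and Y: "Y \<subseteq> {..<p} \<times> {..<p}" and cY: "card Y = p"
    and nd: "\<not> (int p dvd D1 \<and> int p dvd D2)" and inj: "inj_on (\<lambda>x. nat (linform D1 D2 x mod int p)) Y"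
  shows "tile p (plane_emb p ` Y)"
proof -
  have p0: "p > 0" using p prime_gt_0_nat by blast
  obtain xk yk where xk_lt: "\<And>k. xk k < p" and yk_lt: "\<And>k. yk k < p"
    and xk_dv: "\<And>k. int p dvd int (xk k) - int k * D2" and yk_dv: "\<And>k. int p dvd int (yk k) + int k * D1"
    and line_inj: "\<And>k k'. k < p \<Longrightarrow> k' < p \<Longrightarrow> xk k = xk k' \<Longrightarrow> yk k = yk k' \<Longrightarrow> k = k'"
    using kernel_line_mod_prime[OF p nd] by blast
  define tf where "tf ik = (fst ik + p * xk (snd ik), yk (snd ik))" for ik :: "nat \<times> nat"
  define T where "T = tf ` ({..<p} \<times> {..<p})"
  have YG: "plane_emb p ` Y \<subseteq> grpG p" using Y plane_emb_in_grpG[OF p0] by auto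
  show ?thesis
  proof (rule tileI_image[OF p0 YG inj_plane_emb[OF p0], of T])
    show "T \<subseteq> grpG p"
    proof
      fix \<tau> assume "\<tau> \<in> T"
      then obtain i k where ik: "i < p" "k < p" "\<tau> = tf (i,k)" unfolding T_def by auto
      have "xk k * p + i < p*p" using mult_add_less_sq[OF ik(1) xk_lt] .
      thus "\<tau> \<in> grpG p" unfolding ik tf_def grpG_def using yk_lt by (simp add: power2_eq_square mult.commute)
    qed
    have "inj_on tf ({..<p} \<times> {..<p})"
    proof (rule inj_onI)
      fix a b assume a: "a \<in> {..<p} \<times> {..<p}" and b: "b \<in> {..<p} \<times> {..<p}" and e: "tf a = tf b"
      have e1: "fst a + p * xk (snd a) = fst b + p * xk (snd b)" and e2: "yk (snd a) = yk (snd b)"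
        using e unfolding tf_def by simp_all
      have "fst a = fst b" using e1 a b by (metis mod_mult_self2 mod_less mem_Times_iff lessThan_iff)
      moreover have "xk (snd a) = xk (snd b)" using e1 calculation p0 by simp
      ultimately show "a = b" using line_inj[of "snd a" "snd b"] e2 a b by (auto simp: prod_eq_iff)
    qed
    hence "card T = p*p" unfolding T_def by (simp add: card_image card_cartesian_product)
    thus "card Y * card T = p^3" using cY by (simp add: power3_eq_cube)
    fix x x' \<tau> \<tau>' assume x: "x \<in> Y" "x' \<in> Y" and \<tau>: "\<tau> \<in> T" "\<tau>' \<in> T"
      and e: "gadd p (plane_emb p x) \<tau> = gadd p (plane_emb p x') \<tau>'"
    obtain i k where ik: "i < p" "k < p" "\<tau> = tf (i,k)" using \<tau>(1) unfolding T_def by auto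
    obtain i' k' where ik': "i' < p" "k' < p" "\<tau>' = tf (i',k')" using \<tau>(2) unfolding T_def by auto
    have c1: "(p * fst x + (i + p * xk k)) mod (p*p) = (p * fst x' + (i' + p * xk k')) mod (p*p)"
      and c2: "(snd x + yk k) mod p = (snd x' + yk k') mod p"
      using e unfolding gadd_def plane_emb_def ik(3) ik'(3) tf_def by (simp_all add: power2_eq_square)
    define u where "u = (int (fst x) - int (fst x')) + (int (xk k) - int (xk k'))"
    have d1: "int (p*p) dvd int p * u + (int i - int i')"
      using dvd_diff_if_mod_eq[OF c1] unfolding u_def by (simp add: algebra_simps)
    hence "int p dvd int p * u + (int i - int i')" by (metis dvd_mult_left of_nat_mult)
    hence "int p dvd int i - int i'" by (simp add: dvd_add_right_iff)
    hence "i = i'" using ik ik' by (intro nat_eq_if_dvd_diff[of p]) auto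
    hence "int p * int p dvd int p * u" using d1 by simp
    hence E1: "int p dvd u" using p0 by simp
    have E2: "int p dvd (int (snd x) - int (snd x')) + (int (yk k) - int (yk k'))"
      using dvd_diff_if_mod_eq[OF c2] by (simp add: algebra_simps)
    have "linform D1 D2 x - linform D1 D2 x' =
        D1 * u + D2 * ((int (snd x) - int (snd x')) + (int (yk k) - int (yk k')))
      - D1 * ((int (xk k) - int k * D2) - (int (xk k') - int k' * D2))
      - D2 * ((int (yk k) + int k * D1) - (int (yk k') + int k' * D1))"
      unfolding linform_def u_def by (simp add: algebra_simps)
    moreover have "int p dvd D1 * u + D2 * ((int (snd x) - int (snd x')) + (int (yk k) - int (yk k')))
      - D1 * ((int (xk k) - int k * D2) - (int (xk k') - int k' * D2))
      - D2 * ((int (yk k) + int k * D1) - (int (yk k') + int k' * D1))"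
      by (rule dvd_diff[OF dvd_diff[OF dvd_add[OF dvd_mult[OF E1] dvd_mult[OF E2]]
            dvd_mult[OF dvd_diff[OF xk_dv xk_dv]]] dvd_mult[OF dvd_diff[OF yk_dv yk_dv]]])
    ultimately have "linform D1 D2 x mod int p = linform D1 D2 x' mod int p" by (simp add: mod_eq_dvd_iff)
    thus "x = x'" using inj_onD[OF inj _ x] by simp
  qed
qed

text \<open>The spectrum is the line through \<open>(D1, D2)\<close>.\<close>

lemma spectral_plane_emb_transversal:
  assumes p: "prime p" and Y: "Y \<subseteq> {..<p} \<times> {..<p}" and cY: "card Y = p"
    and inj: "inj_on (\<lambda>x. nat (linform D1 D2 x mod int p)) Y"
  shows "spectral_set p (plane_emb p ` Y)"
proof -
  have p0: "p > 0" using p prime_gt_0_nat by blast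
  have fin: "finite Y" using Y finite_subset by (metis finite_SigmaI finite_lessThan)
  define phi where "phi x = nat (linform D1 D2 x mod int p)" for x
  have phi_dv: "int p dvd int (phi x) - linform D1 D2 x" for x unfolding phi_def by (rule dvd_nat_mod_diff[OF p0])
  have injphi: "inj_on phi Y" using inj unfolding phi_def .
  have residues: "phi ` Y = {..<p}"
    using image_eq_lessThan_if_inj[OF cY _ injphi] p0 by (simp add: phi_def nat_less_iff)
  define bc where "bc c = (nat ((int c * D1) mod int p), nat ((int c * D2) mod int p))" for c :: nat
  have bc1: "int p dvd int (fst (bc c)) - int c * D1" for c unfolding bc_def fst_conv by (rule dvd_nat_mod_diff[OF p0])
  have bc2: "int p dvd int (snd (bc c)) - int c * D2" for c unfolding bc_def snd_conv by (rule dvd_nat_mod_diff[OF p0])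
  show ?thesis
  proof (rule spectral_setI_plane_emb[OF p0 Y _ finite_lessThan, where b=bc])
    show "\<forall>c\<in>{..<p}. bc c \<in> grpG p"
      using mult_add_less_sq[of _ p 0] p0 by (auto simp: bc_def grpG_def power2_eq_square nat_less_iff)
    fix c c' assume cc: "c \<in> {..<p}" "c' \<in> {..<p}" "c \<noteq> c'"
    define m where "m = int c - int c'"
    have nm: "\<not> int p dvd m" unfolding m_def using cc not_dvd_diff_if_less by auto
    have "zeta p (int p * linform (int (fst (bc c)) - int (fst (bc c'))) (int (snd (bc c)) - int (snd (bc c'))) x)
        = zeta p (int (phi x) * (int p * m))" for x
    proof -
      have "linform (int (fst (bc c)) - int (fst (bc c'))) (int (snd (bc c)) - int (snd (bc c'))) x - int (phi x) * m =
          int (fst x) * ((int (fst (bc c)) - int c * D1) - (int (fst (bc c')) - int c' * D1))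
        + int (snd x) * ((int (snd (bc c)) - int c * D2) - (int (snd (bc c')) - int c' * D2))
        - m * (int (phi x) - linform D1 D2 x)"
        unfolding linform_def m_def by (simp add: algebra_simps)
      moreover have "int p dvd \<dots>"
        by (rule dvd_diff[OF dvd_add[OF dvd_mult[OF dvd_diff[OF bc1 bc1]] dvd_mult[OF dvd_diff[OF bc2 bc2]]] dvd_mult[OF phi_dv]])
      ultimately have "int p dvd linform (int (fst (bc c)) - int (fst (bc c'))) (int (snd (bc c)) - int (snd (bc c'))) x - int (phi x) * m"
        by simp
      from zeta_p_mult_cong[OF p0 this] show ?thesis by (simp add: algebra_simps)
    qed
    hence "(\<Sum>x\<in>Y. zeta p (int p * linform (int (fst (bc c)) - int (fst (bc c'))) (int (snd (bc c)) - int (snd (bc c'))) x))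
        = (\<Sum>r\<in>phi ` Y. zeta p (int r * (int p * m)))" by (simp add: sum.reindex[OF injphi])
    thus "(\<Sum>x\<in>Y. zeta p (int p * linform (int (fst (bc c)) - int (fst (bc c'))) (int (snd (bc c)) - int (snd (bc c'))) x)) = 0"
      unfolding residues using zeta_subperiod_sum[OF p0 nm] by simp
  next
    fix x x' assume xx: "x \<in> Y" "x' \<in> Y" "x \<noteq> x'"
    define m where "m = linform D1 D2 x - linform D1 D2 x'"
    have nm: "\<not> int p dvd m"
    proof
      assume "int p dvd m"
      hence "linform D1 D2 x mod int p = linform D1 D2 x' mod int p" unfolding m_def by (simp only: mod_eq_dvd_iff)
      hence "phi x = phi x'" unfolding phi_def by simp
      thus False using inj_onD[OF injphi _ xx(1,2)] xx(3) by simp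
    qed
    have "zeta p (int p * linform (int (fst x) - int (fst x')) (int (snd x) - int (snd x')) (bc c))
        = zeta p (int c * (int p * m))" for c
    proof -
      have "linform (int (fst x) - int (fst x')) (int (snd x) - int (snd x')) (bc c) - int c * m =
          (int (fst (bc c)) - int c * D1) * (int (fst x) - int (fst x'))
        + (int (snd (bc c)) - int c * D2) * (int (snd x) - int (snd x'))"
        unfolding linform_def m_def by (simp add: algebra_simps)
      moreover have "int p dvd \<dots>" by (rule dvd_add[OF dvd_mult2[OF bc1] dvd_mult2[OF bc2]])
      ultimately have "int p dvd linform (int (fst x) - int (fst x')) (int (snd x) - int (snd x')) (bc c) - int c * m"
        by simp
      from zeta_p_mult_cong[OF p0 this] show ?thesis by (simp add: algebra_simps)
    qed
    thus "(\<Sum>c\<in>{..<p}. zeta p (int p * linform (int (fst x) - int (fst x')) (int (snd x) - int (snd x')) (bc c))) = 0"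
      using zeta_subperiod_sum[OF p0 nm] by simp
  qed (use p0 cY in \<open>auto simp: lessThan_empty_iff\<close>)
qed

lemma tile_spectral_if_planar_shape:
  assumes p: "prime p" and Y: "Y \<subseteq> {..<p} \<times> {..<p}" and shape: "planar_shape p Y"
  shows "tile p (plane_emb p ` Y) \<and> spectral_set p (plane_emb p ` Y)"
proof -
  have p0: "p > 0" using p prime_gt_0_nat by blast
  consider "card Y = 1" | "Y = {..<p} \<times> {..<p}"
    | D1 D2 where "card Y = p" "\<not> (int p dvd D1 \<and> int p dvd D2)" "inj_on (\<lambda>x. nat (linform D1 D2 x mod int p)) Y"
    using shape unfolding planar_shape_def by blast
  thus ?thesis
  proof cases
    case 1
    have "card (plane_emb p ` Y) = 1" using 1 by (simp add: card_image[OF inj_plane_emb[OF p0]])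
    moreover have "plane_emb p ` Y \<subseteq> grpG p" using Y plane_emb_in_grpG[OF p0] by auto
    ultimately show ?thesis using singleton_tile_spectral[OF p0] by blast
  next
    case 2
    thus ?thesis using tile_spectral_plane_emb_full[OF p0] by simp
  next
    case 3
    thus ?thesis using tile_plane_emb_transversal[OF p Y] spectral_plane_emb_transversal[OF p Y] by blast
  qed
qed

lemma tile_iff_spectral_in_max_subgroup_noncyclic:
  assumes p: "prime p" and A: "A \<subseteq> max_subgroup_noncyclic p" and ne: "A \<noteq> {}"
  shows "tile p A \<longleftrightarrow> spectral_set p A"
proof -
  have p0: "p > 0" using p prime_gt_0_nat by blast
  define Y where "Y = (\<lambda>a. (fst a div p, snd a)) ` A"
  have "a = plane_emb p (fst a div p, snd a)" if "a \<in> A" for a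
    using that A unfolding max_subgroup_noncyclic_def plane_emb_def by (auto simp: prod_eq_iff)
  hence AY: "A = plane_emb p ` Y" unfolding Y_def image_image by (auto simp: image_iff)
  have Y: "Y \<subseteq> {..<p} \<times> {..<p}"
    using A p0 unfolding Y_def max_subgroup_noncyclic_def grpG_def
    by (auto simp: power2_eq_square div_less_iff_less_mult)
  have "Y \<noteq> {}" using ne unfolding Y_def by simp
  show ?thesis unfolding AY
  proof
    assume "tile p (plane_emb p ` Y)"
    thus "spectral_set p (plane_emb p ` Y)"
      using planar_shape_if_tile[OF p Y] tile_spectral_if_planar_shape[OF p Y] by blast
  next
    assume "spectral_set p (plane_emb p ` Y)"
    thus "tile p (plane_emb p ` Y)"
      using planar_shape_if_spectral[OF p Y \<open>Y \<noteq> {}\<close>] tile_spectral_if_planar_shape[OF p Y] by blast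
  qed
qed

theorem lemma5p6:
  fixes p :: nat and H A :: "(nat \<times> nat) set"
  assumes "prime p"
    and "is_subgroupG p H" and "H \<noteq> grpG p"
    and "A \<subseteq> H" and "A \<noteq> {}"
  shows "tile p A \<longleftrightarrow> spectral_set p A"
proof -
  from proper_subgroup_subset_maximal[OF assms(1-3)] show ?thesis
  proof
    assume "H \<subseteq> max_subgroup_noncyclic p"
    with assms(4) have "A \<subseteq> max_subgroup_noncyclic p" by (rule order.trans)
    thus ?thesis by (rule tile_iff_spectral_in_max_subgroup_noncyclic[OF assms(1) _ assms(5)])
  next
    assume "\<exists>l<p. H \<subseteq> max_subgroup_cyclic p l"
    then obtain l where "H \<subseteq> max_subgroup_cyclic p l" by blast
    with assms(4) have "A \<subseteq> max_subgroup_cyclic p l" by (rule order.trans)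
    thus ?thesis by (rule tile_iff_spectral_in_max_subgroup_cyclic[OF assms(1) _ assms(5)])
  qed
qed

end
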